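(* Suppose $D(1)<\infty$. Let $a\ge b\ge1$ be integers and let $C$ be one of $C(a,b)$, $C( *,a)$, $C_w$. Then for all integers $0\le i\le k<n$, $$\mathbb P(j\notin C,\ k+1\le j\le n\mid i\in C,\ k\in C)=\mathbb P(j\notin C,\ k+1\le j\le n\mid k\in C),$$ whenever the conditioning events have positive probability.
   Context: Let $p_0=1$, $q_0=0$, and for $k\ge1$ let $p_k,q_k>0$ with $p_k+q_k=1$. Let $X=(X_k)_{k\ge0}$ be the Markov chain on $\mathbb Z_+$ with $X_0=0$, $\mathbb P(X_{k+1}=n+1\mid X_k=n)=p_n$, $\mathbb P(X_{k+1}=n-1\mid X_k=n)=q_n$. Let $\rho_k=q_k/p_k$ ($k\ge1$) and $D(m)=1+\sum_{j=1}^{\infty}\rho_{m+1}\cdots\rho_{m+j}\in[1,\infty]$ for $m\ge0$. Let $\xi(x)=\sum_{k\ge0}1_{\{X_k=x\}}$ and $\xi(x,\uparrow)=\sum_{k\ge0}1_{\{X_k=x,X_{k+1}=x+1\}}$. Let $C(a,b)=\{x\in\mathbb Z_+:\xi(x)=a,\ \xi(x,\uparrow)=b\}$ and $C( *,a)=\{x\in\mathbb Z_+:\xi(x,\uparrow)=a\}$. A site $R$ is a weak cutpoint if for some $k$, $X_k=R$, $X_i\le R$ for $0\le i\le k-1$ and $X_i\ge R$ for all $i\ge k+1$; $C_w$ is the set of weak cutpoints. *)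

theory Defs
  imports "HOL-Probability.Probability"
begin

definition bd_trans :: "(nat \<Rightarrow> real) \<Rightarrow> nat \<Rightarrow> nat \<Rightarrow> real" where
  "bd_trans p n m = (if m = Suc n then p n else if 0 < n \<and> Suc m = n then 1 - p n else 0)"

definition rho :: "(nat \<Rightarrow> real) \<Rightarrow> nat \<Rightarrow> real" where
  "rho p k = (1 - p k) / p k"

definition Dfun :: "(nat \<Rightarrow> real) \<Rightarrow> nat \<Rightarrow> ennreal" where
  "Dfun p m = 1 + (\<Sum>j. ennreal (\<Prod>i\<in>{m+1..m+Suc j}. rho p i))"

definition xi :: "(nat \<Rightarrow> 'a \<Rightarrow> nat) \<Rightarrow> nat \<Rightarrow> 'a \<Rightarrow> enat" where
  "xi X x \<omega> = (if finite {k. X k \<omega> = x} then enat (card {k. X k \<omega> = x}) else \<infinity>)"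

definition xi_up :: "(nat \<Rightarrow> 'a \<Rightarrow> nat) \<Rightarrow> nat \<Rightarrow> 'a \<Rightarrow> enat" where
  "xi_up X x \<omega> = (if finite {k. X k \<omega> = x \<and> X (Suc k) \<omega> = Suc x}
      then enat (card {k. X k \<omega> = x \<and> X (Suc k) \<omega> = Suc x}) else \<infinity>)"

definition weak_cutpoint :: "(nat \<Rightarrow> 'a \<Rightarrow> nat) \<Rightarrow> nat \<Rightarrow> 'a \<Rightarrow> bool" where
  "weak_cutpoint X R \<omega> \<longleftrightarrow>
     (\<exists>k. X k \<omega> = R \<and> (\<forall>i<k. X i \<omega> \<le> R) \<and> (\<forall>i>k. R \<le> X i \<omega>))"

datatype cset_kind = Cab nat nat | Cstar nat | Cw

fun inC :: "cset_kind \<Rightarrow> (nat \<Rightarrow> 'a \<Rightarrow> nat) \<Rightarrow> nat \<Rightarrow> 'a \<Rightarrow> bool" where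
  "inC (Cab a b) X x \<omega> \<longleftrightarrow> xi X x \<omega> = enat a \<and> xi_up X x \<omega> = enat b"
| "inC (Cstar a) X x \<omega> \<longleftrightarrow> xi_up X x \<omega> = enat a"
| "inC Cw X x \<omega> \<longleftrightarrow> weak_cutpoint X x \<omega>"

definition is_bd_chain :: "'a measure \<Rightarrow> (nat \<Rightarrow> real) \<Rightarrow> (nat \<Rightarrow> 'a \<Rightarrow> nat) \<Rightarrow> bool" where
  "is_bd_chain M p X \<longleftrightarrow>
     prob_space M \<and>
     (\<forall>k. X k \<in> measurable M (count_space UNIV)) \<and>
     (\<forall>xs. xs \<noteq> [] \<longrightarrow>
        measure M {\<omega> \<in> space M. \<forall>i<length xs. X i \<omega> = xs ! i}
        = (if hd xs = 0 then 1 else 0) * (\<Prod>i<length xs - 1. bd_trans p (xs ! i) (xs ! Suc i)))"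

end

(*
  Cut the path at its last up-step (n, n + 1) from the levels 0..n.  Given that k is in C, this
  step exists almost surely: the up-crossings of a suitable level L are finite (L = k for C(a,b)
  and C( *,a), L = k - 1 for weak cutpoints), and a level visited infinitely often is left by every
  possible step infinitely often, so every level up to n is visited only finitely often.  The
  event that the chain follows a given finite path rho up to that step and then stays above n
  has probability w(rho) h(n), where w is the product of the transition probabilities and h(n)
  the probability of never returning to n from n + 1.

  Sorting the steps of rho by whether they start at or below L or above L is a bijection onto
  pairs (below part, above part) that only have to agree on the number m of up-crossings of L,
  and w factorizes accordingly.  Membership in C of the levels up to L is read off the below
  part, that of the levels above L off the above part.  For C(a,b) and C( *,a), the event that k
  is in C fixes m, so the four events making up the two conditional probabilities all have
  probabilities of the product form K(below condition) G(above condition) h(n), which gives the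
  identity.  For weak cutpoints, k = L + 1 is one iff the above part never steps down from k
  after its first up-step from k; such an above part consists of m - 1 immediate returns
  (k, k - 1) followed by an above part with a single up-crossing, and moving the factor
  (1 - p k)^(m - 1) to the below part gives the product form again.
*)

theory Submission
  imports Defs
begin

lemma last_filter: "s \<noteq> [] \<Longrightarrow> P (last s) \<Longrightarrow> filter P s \<noteq> [] \<and> last (filter P s) = last s"
  by (induction s rule: rev_induct) auto

lemma count_list_filter: "P e \<Longrightarrow> count_list (filter P s) e = count_list s e"
  by (induction s) auto

lemma enat_card_eq_iff:
  "(if finite {t. P t} then enat (card {t. P t}) else \<infinity>) = enat a \<longleftrightarrow>
    (\<exists>l. distinct l \<and> length l = a \<and> (\<forall>t. P t \<longleftrightarrow> t \<in> set l))"
proof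
  assume "(if finite {t. P t} then enat (card {t. P t}) else \<infinity>) = enat a"
  then have "finite {t. P t}" "card {t. P t} = a" by (auto split: if_splits)
  moreover obtain l where "set l = {t. P t}" "distinct l"
    using finite_distinct_list[OF \<open>finite {t. P t}\<close>] by blast
  ultimately show "\<exists>l. distinct l \<and> length l = a \<and> (\<forall>t. P t \<longleftrightarrow> t \<in> set l)"
    using distinct_card[of l] by (intro exI[of _ l]) auto
next
  assume "\<exists>l. distinct l \<and> length l = a \<and> (\<forall>t. P t \<longleftrightarrow> t \<in> set l)"
  then obtain l where "distinct l" "length l = a" "{t. P t} = set l" by auto
  then show "(if finite {t. P t} then enat (card {t. P t}) else \<infinity>) = enat a" by (simp add: distinct_card)
qed

lemma infinite_ex_card_before:
  fixes V :: "nat set"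
  assumes "infinite V"
  shows "\<exists>\<tau>\<in>V. s \<le> \<tau> \<and> card {t \<in> {s..<\<tau>}. t \<in> V} = r"
proof -
  let ?W = "V \<inter> {s..}"
  have "V \<subseteq> {..<s} \<union> ?W" by auto
  then have W: "infinite ?W" using assms finite_subset by blast
  let ?\<tau> = "enumerate ?W r"
  have "{t \<in> {s..<?\<tau>}. t \<in> V} = enumerate ?W ` {..<r}"
  proof
    show "{t \<in> {s..<?\<tau>}. t \<in> V} \<subseteq> enumerate ?W ` {..<r}"
    proof
      fix t assume "t \<in> {t \<in> {s..<?\<tau>}. t \<in> V}"
      with enumerate_Ex[OF W, of t] obtain i where "enumerate ?W i = t" "t < ?\<tau>" by auto
      with W show "t \<in> enumerate ?W ` {..<r}" by auto
    qed
    show "enumerate ?W ` {..<r} \<subseteq> {t \<in> {s..<?\<tau>}. t \<in> V}"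
      using enumerate_in_set[OF W] W by auto
  qed
  then have "card {t \<in> {s..<?\<tau>}. t \<in> V} = r"
    using inj_enumerate[OF W] by (simp add: card_image inj_on_subset)
  with enumerate_in_set[OF W, of r] show ?thesis by blast
qed

lemma ennreal_mult_INF:
  fixes c :: ennreal
  assumes "c < top"
  shows "c * (INF s. f s) = (INF s. c * f s)"
proof -
  have "continuous_on UNIV ((*) c)"
    using ennreal_continuous_on_cmult[OF assms, of UNIV "\<lambda>x. x"] by simp
  then have "continuous (at_right (Inf (range f))) ((*) c)"
    by (simp add: continuous_on_eq_continuous_at continuous_at_imp_continuous_at_within)
  then have "c * Inf (range f) = (INF s\<in>range f. c * s)"
    by (rule continuous_at_Inf_mono[rotated]) (auto simp: mono_def mult_left_mono)
  then show ?thesis by (simp add: image_image)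
qed

lemma measure_ratio_eq_if_product_form:
  fixes Ka K1 Gf G1 h :: ennreal
  assumes "emeasure M E1 = Ka * Gf * h" "emeasure M E2 = Ka * G1 * h"
    and "emeasure M E3 = K1 * Gf * h" "emeasure M E4 = K1 * G1 * h"
    and "0 < measure M E2" "0 < measure M E4"
  shows "measure M E1 / measure M E2 = measure M E3 / measure M E4"
proof -
  have "emeasure M E1 * emeasure M E4 = emeasure M E2 * emeasure M E3"
    using assms(1-4) by (simp add: ac_simps)
  then have "measure M E1 * measure M E4 = measure M E2 * measure M E3"
    by (metis enn2real_mult measure_def)
  with assms(5,6) show ?thesis by (simp add: frac_eq_eq)
qed

section \<open>Paths as lists of steps\<close>

type_synonym steps = "(nat \<times> nat) list"

definition steps_of :: "nat list \<Rightarrow> steps" where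
  "steps_of xs = zip xs (tl xs)"

lemma steps_of_simps [simp]:
  "steps_of [] = []" "steps_of [x] = []" "steps_of (x # y # ys) = (x, y) # steps_of (y # ys)"
  by (auto simp: steps_of_def)

lemma length_steps_of [simp]: "length (steps_of xs) = length xs - 1"
  by (simp add: steps_of_def)

lemma nth_steps_of: "Suc i < length xs \<Longrightarrow> steps_of xs ! i = (xs ! i, xs ! Suc i)"
  by (simp add: steps_of_def nth_tl)

lemma steps_of_append: "xs \<noteq> [] \<Longrightarrow> steps_of (xs @ ys) = steps_of xs @ steps_of (last xs # ys)"
  by (induction xs rule: induct_list012) auto

lemma map_snd_steps_of: "map snd (steps_of xs) = tl xs"
  by (simp add: steps_of_def map_snd_zip_take)

lemma steps_of_inj:
  assumes "2 \<le> length xs" "2 \<le> length ys" "steps_of xs = steps_of ys"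
  shows "xs = ys"
proof -
  obtain x x' xs' y y' ys' where "xs = x # x' # xs'" "ys = y # y' # ys'"
    using assms(1,2) by (metis Suc_le_length_iff numeral_2_eq_2)
  moreover have "tl xs = tl ys"
    using arg_cong[OF assms(3), of "map snd"] by (simp add: map_snd_steps_of)
  ultimately show ?thesis using assms(3) by simp
qed

lemma hd_steps_of: "2 \<le> length \<rho> \<Longrightarrow> fst (hd (steps_of \<rho>)) = hd \<rho>"
  by (cases \<rho>; cases "tl \<rho>") auto

lemma last_steps_of: "2 \<le> length \<rho> \<Longrightarrow> last (steps_of \<rho>) = (\<rho> ! (length \<rho> - 2), last \<rho>)"
proof -
  assume l: "2 \<le> length \<rho>"
  then have "steps_of \<rho> \<noteq> []" "\<rho> \<noteq> []" by (auto simp flip: length_0_conv)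
  with l show ?thesis
    by (simp add: last_conv_nth nth_steps_of numeral_2_eq_2 Suc_diff_Suc)
qed

definition bd_step :: "nat \<times> nat \<Rightarrow> bool" where
  "bd_step e \<longleftrightarrow> snd e = Suc (fst e) \<or> (0 < fst e \<and> Suc (snd e) = fst e)"

fun chain_from :: "nat \<Rightarrow> steps \<Rightarrow> bool" where
  "chain_from c [] \<longleftrightarrow> True"
| "chain_from c (e # s) \<longleftrightarrow> fst e = c \<and> chain_from (snd e) s"

lemma chain_from_steps_of: "chain_from x (steps_of (x # xs))"
  by (induction xs arbitrary: x) auto

lemma steps_of_chain_from: "chain_from c s \<Longrightarrow> steps_of (c # map snd s) = s"
  by (induction s arbitrary: c) auto

definition end_pos :: "nat \<Rightarrow> steps \<Rightarrow> nat" where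
  "end_pos c s = (if s = [] then c else snd (last s))"

lemma end_pos_simps [simp]: "end_pos c [] = c" "end_pos c (e # s) = end_pos (snd e) s"
  by (simp_all add: end_pos_def)

section \<open>Cutting a path at a level\<close>

definition steps_below :: "nat \<Rightarrow> steps \<Rightarrow> steps" where
  "steps_below L s = filter (\<lambda>e. fst e \<le> L) s"

definition steps_above :: "nat \<Rightarrow> steps \<Rightarrow> steps" where
  "steps_above L s = filter (\<lambda>e. L < fst e) s"

text \<open>Chaining of the two parts of a path cut at level \<open>L\<close>: below \<open>L + 1\<close> the path resumes
  at \<open>L\<close> after each up-crossing \<open>(L, L + 1)\<close>, above \<open>L\<close> it resumes at \<open>L + 1\<close> after each
  down-crossing \<open>(L + 1, L)\<close>.\<close>

fun chain_below :: "nat \<Rightarrow> nat \<Rightarrow> steps \<Rightarrow> bool" where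
  "chain_below L c [] \<longleftrightarrow> True"
| "chain_below L c (e # s) \<longleftrightarrow> fst e = c \<and> chain_below L (if e = (L, Suc L) then L else snd e) s"

fun chain_above :: "nat \<Rightarrow> nat \<Rightarrow> steps \<Rightarrow> bool" where
  "chain_above L c [] \<longleftrightarrow> True"
| "chain_above L c (e # s) \<longleftrightarrow> fst e = c \<and> chain_above L (if e = (Suc L, L) then Suc L else snd e) s"

text \<open>The flag records whether the path is currently at or below \<open>L\<close>.\<close>

fun interleave :: "nat \<Rightarrow> bool \<Rightarrow> steps \<Rightarrow> steps \<Rightarrow> steps" where
  "interleave L True [] as = as"
| "interleave L True (e # bs) as = e # interleave L (e \<noteq> (L, Suc L)) bs as"
| "interleave L False bs [] = bs"
| "interleave L False bs (e # as) = e # interleave L (e = (Suc L, L)) bs as"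

lemma filter_interleave:
  assumes "list_all P bs" "list_all (\<lambda>e. \<not> P e) as"
  shows "filter P (interleave L m bs as) = bs" "filter (\<lambda>e. \<not> P e) (interleave L m bs as) = as"
  using assms by (induction L m bs as rule: interleave.induct) (auto simp: list_all_iff)

lemma set_interleave: "set (interleave L m bs as) = set bs \<union> set as"
  by (induction L m bs as rule: interleave.induct) auto

lemma length_interleave: "length (interleave L m bs as) = length bs + length as"
  by (induction L m bs as rule: interleave.induct) auto

lemma interleave_eq_Nil_iff: "interleave L m bs as = [] \<longleftrightarrow> bs = [] \<and> as = []"
  by (metis add_is_0 length_0_conv length_interleave)

lemma interleave_steps_below_above:
  assumes "chain_from c s" "list_all bd_step s"
  shows "interleave L (c \<le> L) (steps_below L s) (steps_above L s) = s"
  using assms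
proof (induction s arbitrary: c)
  case Nil
  then show ?case by (cases "c \<le> L") (auto simp: steps_below_def steps_above_def)
next
  case (Cons e s)
  obtain x y where e: "e = (x, y)" by force
  with Cons.prems have x: "x = c" and step: "bd_step (x, y)" and s: "chain_from y s" "list_all bd_step s"
    by auto
  have IH: "interleave L (y \<le> L) (steps_below L s) (steps_above L s) = s"
    using Cons.IH[OF s] .
  show ?case
  proof (cases "x \<le> L")
    case True
    with step e have "(e \<noteq> (L, Suc L)) = (y \<le> L)" by (auto simp: bd_step_def)
    with True IH e x show ?thesis by (simp add: steps_below_def steps_above_def)
  next
    case False
    with step e have "(e = (Suc L, L)) = (y \<le> L)" by (auto simp: bd_step_def)
    with False IH e x show ?thesis by (simp add: steps_below_def steps_above_def)
  qed
qed

lemma chain_steps_below_above: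
  assumes "chain_from c s" "list_all bd_step s"
  shows "chain_below L (min c L) (steps_below L s) \<and> chain_above L (max c (Suc L)) (steps_above L s)"
  using assms
proof (induction s arbitrary: c)
  case Nil
  then show ?case by (simp add: steps_below_def steps_above_def)
next
  case (Cons e s)
  obtain x y where e: "e = (x, y)" by force
  with Cons.prems have x: "x = c" and step: "bd_step (x, y)" and s: "chain_from y s" "list_all bd_step s"
    by auto
  note IH = Cons.IH[OF s]
  consider "x = L \<or> x = Suc L" | "x < L" | "Suc L < x" by linarith
  then show ?case
  proof cases
    case 1
    with IH step e x show ?thesis by (auto simp: steps_below_def steps_above_def bd_step_def)
  next
    case 2
    with step e have "y \<le> L" by (auto simp: bd_step_def)
    with 2 IH e x show ?thesis by (auto simp: steps_below_def steps_above_def)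
  next
    case 3
    with step e have "Suc L \<le> y" by (auto simp: bd_step_def)
    with 3 IH e x show ?thesis by (auto simp: steps_below_def steps_above_def)
  qed
qed

lemma last_steps_below:
  assumes "chain_from c s" "list_all bd_step s" "L < end_pos c s"
  shows "(steps_below L s = [] \<longrightarrow> L < c) \<and> (steps_below L s \<noteq> [] \<longrightarrow> last (steps_below L s) = (L, Suc L))"
  using assms
proof (induction s arbitrary: c)
  case Nil
  then show ?case by (simp add: steps_below_def)
next
  case (Cons e s)
  obtain x y where e: "e = (x, y)" by force
  with Cons.prems have "x = c" "bd_step (x, y)" and s: "chain_from y s" "list_all bd_step s" "L < end_pos y s"
    by auto
  with Cons.IH[OF s] e show ?case by (auto simp: steps_below_def bd_step_def)
qed

lemma up_down_crossings_balance:
  assumes "chain_from c s" "list_all bd_step s"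
  shows "int (count_list s (L, Suc L)) - int (count_list s (Suc L, L)) =
     of_bool (L < end_pos c s) - of_bool (L < c)"
  using assms
proof (induction s arbitrary: c)
  case (Cons e s)
  obtain x y where e: "e = (x, y)" by force
  with Cons.prems have "x = c" "bd_step (x, y)" and s: "chain_from y s" "list_all bd_step s" by auto
  with Cons.IH[OF s] e show ?case by (auto simp: bd_step_def)
qed simp

definition exit_steps :: "nat \<Rightarrow> steps \<Rightarrow> bool" where
  "exit_steps n s \<longleftrightarrow> chain_from 0 s \<and> list_all bd_step s \<and> s \<noteq> [] \<and> last s = (n, Suc n)"

definition below_part :: "nat \<Rightarrow> steps \<Rightarrow> bool" where
  "below_part L b \<longleftrightarrow> chain_below L 0 b \<and> list_all (\<lambda>e. fst e \<le> L) b \<and> list_all bd_step b \<and>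
     b \<noteq> [] \<and> last b = (L, Suc L)"

text \<open>The index \<open>m\<close> is the number of up-crossings \<open>(L, L + 1)\<close> of the whole path.\<close>

definition above_part :: "nat \<Rightarrow> nat \<Rightarrow> nat \<Rightarrow> steps \<Rightarrow> bool" where
  "above_part L n m a \<longleftrightarrow> chain_above L (Suc L) a \<and> list_all (\<lambda>e. L < fst e) a \<and> list_all bd_step a \<and>
     a \<noteq> [] \<and> last a = (n, Suc n) \<and> Suc (count_list a (Suc L, L)) = m"

lemma count_list_pos_below_part: "below_part L b \<Longrightarrow> 0 < count_list b (L, Suc L)"
  by (metis below_part_def count_list_0_iff gr0I last_in_set)

lemma exit_steps_split:
  assumes "exit_steps n s" "L < n"
  shows "below_part L (steps_below L s) \<and> above_part L n (count_list (steps_below L s) (L, Suc L)) (steps_above L s)"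
proof -
  have s: "chain_from 0 s" "list_all bd_step s" "s \<noteq> []" "last s = (n, Suc n)"
    using assms(1) by (auto simp: exit_steps_def)
  then have end_pos: "L < end_pos 0 s" using assms(2) by (simp add: end_pos_def)
  have "int (count_list s (L, Suc L)) - int (count_list s (Suc L, L)) = 1"
    using up_down_crossings_balance[OF s(1,2), of L] end_pos by simp
  moreover have "count_list (steps_below L s) (L, Suc L) = count_list s (L, Suc L)"
    "count_list (steps_above L s) (Suc L, L) = count_list s (Suc L, L)"
    unfolding steps_below_def steps_above_def by (simp_all add: count_list_filter)
  moreover have "steps_above L s \<noteq> []" "last (steps_above L s) = (n, Suc n)"
    using last_filter[OF s(3), of "\<lambda>e. L < fst e"] s(4) assms(2) by (auto simp: steps_above_def)
  moreover have "list_all (\<lambda>e. fst e \<le> L) (steps_below L s)" "list_all (\<lambda>e. L < fst e) (steps_above L s)"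
    "list_all bd_step (steps_below L s)" "list_all bd_step (steps_above L s)"
    using s(2) by (auto simp: steps_below_def steps_above_def list_all_iff)
  ultimately show ?thesis
    using chain_steps_below_above[OF s(1,2), of L] last_steps_below[OF s(1,2) end_pos]
    by (auto simp: below_part_def above_part_def)
qed

lemma chain_from_interleave:
  assumes "if m then c \<le> L else L < c"
    and "chain_below L (if m then c else L) bs" "chain_above L (if m then Suc L else c) as"
    and "list_all (\<lambda>e. fst e \<le> L) bs" "list_all (\<lambda>e. L < fst e) as"
    and "list_all bd_step bs" "list_all bd_step as"
    and "count_list bs (L, Suc L) = count_list as (Suc L, L) + of_bool m"
    and "bs \<noteq> [] \<longrightarrow> last bs = (L, Suc L)" "as \<noteq> [] \<longrightarrow> last as \<noteq> (Suc L, L)"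
  shows "chain_from c (interleave L m bs as) \<and> (as \<noteq> [] \<longrightarrow> last (interleave L m bs as) = last as)"
  using assms
proof (induction L m bs as arbitrary: c rule: interleave.induct)
  case (1 L as)
  then show ?case by simp
next
  case (2 L e bs as)
  obtain x y where e: "e = (x, y)" by force
  show ?case
  proof (cases "e = (L, Suc L)")
    case True
    have "chain_from (Suc L) (interleave L (e \<noteq> (L, Suc L)) bs as) \<and>
        (as \<noteq> [] \<longrightarrow> last (interleave L (e \<noteq> (L, Suc L)) bs as) = last as)"
      by (rule "2.IH") (use True "2.prems" in \<open>auto split: if_splits\<close>)
    with True "2.prems" show ?thesis by (auto simp: interleave_eq_Nil_iff)
  next
    case False
    with "2.prems" e have "y \<le> L" "bs \<noteq> []" by (auto simp: bd_step_def)
    have "chain_from y (interleave L (e \<noteq> (L, Suc L)) bs as) \<and>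
        (as \<noteq> [] \<longrightarrow> last (interleave L (e \<noteq> (L, Suc L)) bs as) = last as)"
      by (rule "2.IH") (use False e \<open>y \<le> L\<close> \<open>bs \<noteq> []\<close> "2.prems" in auto)
    with False e "2.prems" \<open>bs \<noteq> []\<close> show ?thesis by (auto simp: interleave_eq_Nil_iff)
  qed
next
  case (3 L bs)
  then have "bs = []" by (cases bs rule: rev_cases) auto
  then show ?case by simp
next
  case (4 L bs e as)
  obtain x y where e: "e = (x, y)" by force
  show ?case
  proof (cases "e = (Suc L, L)")
    case True
    with "4.prems" have "as \<noteq> []" by auto
    have "chain_from L (interleave L (e = (Suc L, L)) bs as) \<and>
        (as \<noteq> [] \<longrightarrow> last (interleave L (e = (Suc L, L)) bs as) = last as)"
      by (rule "4.IH") (use True \<open>as \<noteq> []\<close> "4.prems" in auto)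
    with True "4.prems" \<open>as \<noteq> []\<close> show ?thesis by (auto simp: interleave_eq_Nil_iff)
  next
    case False
    with "4.prems" e have "L < y" by (auto simp: bd_step_def)
    show ?thesis
    proof (cases "as = []")
      case True
      with False "4.prems" have "bs = []" by (cases bs rule: rev_cases) auto
      with True "4.prems" show ?thesis by simp
    next
      case False
      have "chain_from y (interleave L (e = (Suc L, L)) bs as) \<and>
          (as \<noteq> [] \<longrightarrow> last (interleave L (e = (Suc L, L)) bs as) = last as)"
        by (rule "4.IH") (use False \<open>e \<noteq> (Suc L, L)\<close> \<open>L < y\<close> e "4.prems" in auto)
      with False \<open>e \<noteq> (Suc L, L)\<close> e "4.prems" show ?thesis by (auto simp: interleave_eq_Nil_iff)
    qed
  qed
qed

lemma bij_betw_exit_steps_split: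
  assumes "L < n"
  shows "bij_betw (\<lambda>s. (steps_below L s, steps_above L s)) {s. exit_steps n s}
     {(b, a). below_part L b \<and> above_part L n (count_list b (L, Suc L)) a}"
proof (rule bij_betwI')
  fix s t assume s: "s \<in> {s. exit_steps n s}" and t: "t \<in> {s. exit_steps n s}"
  show "((steps_below L s, steps_above L s) = (steps_below L t, steps_above L t)) = (s = t)"
  proof
    assume eq: "(steps_below L s, steps_above L s) = (steps_below L t, steps_above L t)"
    have "s = interleave L True (steps_below L s) (steps_above L s)"
      using interleave_steps_below_above[of 0 s L] s by (simp add: exit_steps_def)
    also have "\<dots> = t"
      using eq interleave_steps_below_above[of 0 t L] t by (simp add: exit_steps_def)
    finally show "s = t" .
  qed simp
next
  fix s assume "s \<in> {s. exit_steps n s}"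
  then show "(steps_below L s, steps_above L s) \<in> {(b, a). below_part L b \<and> above_part L n (count_list b (L, Suc L)) a}"
    using exit_steps_split[OF _ assms] by auto
next
  fix z assume "z \<in> {(b, a). below_part L b \<and> above_part L n (count_list b (L, Suc L)) a}"
  then obtain b a where z: "z = (b, a)" and b: "below_part L b" and a: "above_part L n (count_list b (L, Suc L)) a"
    by auto
  define s where "s = interleave L True b a"
  have "list_all (\<lambda>e. fst e \<le> L) b" "list_all (\<lambda>e. \<not> fst e \<le> L) a"
    using a b by (auto simp: above_part_def below_part_def list_all_iff)
  from filter_interleave[OF this] have "steps_below L s = b" "steps_above L s = a"
    by (simp_all add: s_def steps_below_def steps_above_def not_le)
  moreover have "chain_from 0 s \<and> (a \<noteq> [] \<longrightarrow> last s = last a)"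
    unfolding s_def
    by (rule chain_from_interleave) (use a b assms in \<open>auto simp: above_part_def below_part_def\<close>)
  moreover have "list_all bd_step s"
    using a b by (auto simp: s_def list_all_iff set_interleave above_part_def below_part_def)
  moreover have "s \<noteq> []" using a by (auto simp: s_def interleave_eq_Nil_iff above_part_def)
  ultimately have "exit_steps n s \<and> z = (steps_below L s, steps_above L s)"
    using a z by (auto simp: exit_steps_def above_part_def)
  then show "\<exists>s\<in>{s. exit_steps n s}. z = (steps_below L s, steps_above L s)" by blast
qed

definition steps_at :: "nat \<Rightarrow> steps \<Rightarrow> steps" where
  "steps_at x s = filter (\<lambda>e. fst e = x) s"

fun no_down_after_up :: "nat \<Rightarrow> steps \<Rightarrow> bool" where
  "no_down_after_up x [] \<longleftrightarrow> True"
| "no_down_after_up x (e # s) \<longleftrightarrow> (if e = (x, Suc x) then (x, x - 1) \<notin> set s else no_down_after_up x s)"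

definition inC_steps :: "cset_kind \<Rightarrow> nat \<Rightarrow> steps \<Rightarrow> bool" where
  "inC_steps C x s = (case C of
      Cab a b \<Rightarrow> length (steps_at x s) = a \<and> count_list s (x, Suc x) = b
    | Cstar a \<Rightarrow> count_list s (x, Suc x) = a
    | Cw \<Rightarrow> no_down_after_up x s)"

lemma no_down_after_up_steps_at: "no_down_after_up x (steps_at x s) = no_down_after_up x s"
  by (induction s) (auto simp: steps_at_def)

lemma count_list_steps_at: "count_list (steps_at x s) (x, y) = count_list s (x, y)"
  by (simp add: steps_at_def count_list_filter)

lemma inC_steps_cong:
  assumes "steps_at x s = steps_at x s'"
  shows "inC_steps C x s = inC_steps C x s'"
proof -
  have "count_list s (x, Suc x) = count_list s' (x, Suc x)"
    using count_list_steps_at[of x s] count_list_steps_at[of x s'] assms by simp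
  moreover have "no_down_after_up x s = no_down_after_up x s'"
    using no_down_after_up_steps_at[of x s] no_down_after_up_steps_at[of x s'] assms by simp
  ultimately show ?thesis using assms by (simp add: inC_steps_def split: cset_kind.split)
qed

lemma steps_at_steps_below: "x \<le> L \<Longrightarrow> steps_at x (steps_below L s) = steps_at x s"
  by (auto simp: steps_at_def steps_below_def filter_filter intro!: filter_cong)

lemma steps_at_steps_above: "L < x \<Longrightarrow> steps_at x (steps_above L s) = steps_at x s"
  by (auto simp: steps_at_def steps_above_def filter_filter intro!: filter_cong)

lemma steps_at_replicate_append: "x \<noteq> y \<Longrightarrow> steps_at x (replicate m (y, z) @ s) = steps_at x s"
  by (induction m) (auto simp: steps_at_def)

lemma no_down_after_up_iff_nth:
  "no_down_after_up x s \<longleftrightarrow> (\<forall>u v. u < v \<and> v < length s \<and> s ! u = (x, Suc x) \<longrightarrow> s ! v \<noteq> (x, x - 1))"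
proof (induction s)
  case (Cons e s)
  show ?case
  proof (cases "e = (x, Suc x)")
    case True
    have "(x, x - 1) \<notin> set s \<longleftrightarrow>
        (\<forall>u v. u < v \<and> v < length (e # s) \<and> (e # s) ! u = (x, Suc x) \<longrightarrow> (e # s) ! v \<noteq> (x, x - 1))"
    proof
      assume notin: "(x, x - 1) \<notin> set s"
      show "\<forall>u v. u < v \<and> v < length (e # s) \<and> (e # s) ! u = (x, Suc x) \<longrightarrow> (e # s) ! v \<noteq> (x, x - 1)"
      proof (intro allI impI)
        fix u v assume "u < v \<and> v < length (e # s) \<and> (e # s) ! u = (x, Suc x)"
        then obtain v' where "v = Suc v'" "v' < length s" by (cases v) auto
        with notin show "(e # s) ! v \<noteq> (x, x - 1)" using nth_mem by fastforce
      qed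
    next
      assume "\<forall>u v. u < v \<and> v < length (e # s) \<and> (e # s) ! u = (x, Suc x) \<longrightarrow> (e # s) ! v \<noteq> (x, x - 1)"
      note H = this
      show "(x, x - 1) \<notin> set s"
      proof
        assume "(x, x - 1) \<in> set s"
        then obtain v where "v < length s" "s ! v = (x, x - 1)" by (auto simp: in_set_conv_nth)
        then show False using H[rule_format, of 0 "Suc v"] True by simp
      qed
    qed
    with True show ?thesis by simp
  next
    case False
    have "(\<forall>u v. u < v \<and> v < length (e # s) \<and> (e # s) ! u = (x, Suc x) \<longrightarrow> (e # s) ! v \<noteq> (x, x - 1))
       \<longleftrightarrow> (\<forall>u v. u < v \<and> v < length s \<and> s ! u = (x, Suc x) \<longrightarrow> s ! v \<noteq> (x, x - 1))"
    proof
      assume "\<forall>u v. u < v \<and> v < length (e # s) \<and> (e # s) ! u = (x, Suc x) \<longrightarrow> (e # s) ! v \<noteq> (x, x - 1)"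
      then show "\<forall>u v. u < v \<and> v < length s \<and> s ! u = (x, Suc x) \<longrightarrow> s ! v \<noteq> (x, x - 1)"
        by (metis Suc_less_eq length_Cons nth_Cons_Suc)
    next
      assume H: "\<forall>u v. u < v \<and> v < length s \<and> s ! u = (x, Suc x) \<longrightarrow> s ! v \<noteq> (x, x - 1)"
      show "\<forall>u v. u < v \<and> v < length (e # s) \<and> (e # s) ! u = (x, Suc x) \<longrightarrow> (e # s) ! v \<noteq> (x, x - 1)"
      proof (intro allI impI)
        fix u v assume uv: "u < v \<and> v < length (e # s) \<and> (e # s) ! u = (x, Suc x)"
        with False obtain u' v' where "u = Suc u'" "v = Suc v'" by (cases u; cases v) auto
        with H uv show "(e # s) ! v \<noteq> (x, x - 1)" by auto
      qed
    qed
    with False Cons.IH show ?thesis by simp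
  qed
qed simp

definition path_weight :: "(nat \<Rightarrow> real) \<Rightarrow> steps \<Rightarrow> real" where
  "path_weight p s = prod_list (map (\<lambda>e. bd_trans p (fst e) (snd e)) s)"

lemma path_weight_simps [simp]:
  "path_weight p [] = 1"
  "path_weight p (e # s) = bd_trans p (fst e) (snd e) * path_weight p s"
  "path_weight p (s @ t) = path_weight p s * path_weight p t"
  by (simp_all add: path_weight_def)

lemma path_weight_steps_below_above:
  "path_weight p s = path_weight p (steps_below L s) * path_weight p (steps_above L s)"
  by (induction s) (auto simp: steps_below_def steps_above_def)

lemma path_weight_nonneg: "(\<And>x. 0 \<le> p x \<and> p x \<le> 1) \<Longrightarrow> 0 \<le> path_weight p s"
  by (induction s) (auto simp: bd_trans_def)

lemma path_weight_eq_0: "\<not> list_all bd_step s \<Longrightarrow> path_weight p s = 0"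
  by (induction s) (auto simp: bd_step_def bd_trans_def)

lemma path_weight_replicate_down: "path_weight p (replicate m (Suc L, L)) = (1 - p (Suc L)) ^ m"
  by (induction m) (auto simp: bd_trans_def)

lemma above_part_no_down_after_up_decomp:
  assumes "above_part L n m a" "no_down_after_up (Suc L) a"
  shows "1 \<le> m \<and> (\<exists>g. a = replicate (m - 1) (Suc L, L) @ g \<and> above_part L n 1 g)"
  using assms
proof (induction a arbitrary: m)
  case Nil
  then show ?case by (simp add: above_part_def)
next
  case (Cons e a)
  have m: "m = Suc (count_list (e # a) (Suc L, L))" and e: "fst e = Suc L" "bd_step e"
    using Cons.prems by (auto simp: above_part_def)
  show ?case
  proof (cases "e = (Suc L, L)")
    case True
    with Cons.prems have "above_part L n (m - 1) a" "no_down_after_up (Suc L) a"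
      by (auto simp: above_part_def split: if_splits)
    with Cons.IH obtain g where "a = replicate (m - 1 - 1) (Suc L, L) @ g" "above_part L n 1 g" by blast
    moreover obtain k where "m = Suc (Suc k)" using m True by simp
    ultimately show ?thesis using True by auto
  next
    case False
    with e have "e = (Suc L, Suc (Suc L))" by (cases e) (auto simp: bd_step_def)
    with Cons.prems have "count_list a (Suc L, L) = 0" by (simp add: count_list_0_iff)
    with m False have "m = 1" by simp
    with Cons.prems show ?thesis by auto
  qed
qed

lemma above_part_replicate_down:
  assumes g: "above_part L n 1 g"
  shows "above_part L n (Suc k) (replicate k (Suc L, L) @ g) \<and>
    no_down_after_up (Suc L) (replicate k (Suc L, L) @ g)"
proof (induction k)
  case 0
  obtain e g' where g': "g = e # g'" using g by (cases g) (auto simp: above_part_def)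
  with g have "fst e = Suc L" "bd_step e" "e \<noteq> (Suc L, L)" "(Suc L, L) \<notin> set g'"
    by (auto simp: above_part_def count_list_0_iff split: if_splits)
  then have "e = (Suc L, Suc (Suc L))" by (cases e) (auto simp: bd_step_def)
  with g g' \<open>(Suc L, L) \<notin> set g'\<close> show ?case by simp
next
  case (Suc k)
  then show ?case by (auto simp: above_part_def bd_step_def)
qed

lemma bij_betw_replicate_down:
  assumes "1 \<le> m" and Q: "\<And>g k. Q (replicate k (Suc L, L) @ g) = Q g"
  shows "bij_betw (\<lambda>g. replicate (m - 1) (Suc L, L) @ g) {g. above_part L n 1 g \<and> Q g}
    {a. above_part L n m a \<and> no_down_after_up (Suc L) a \<and> Q a}"
proof (rule bij_betw_imageI)
  show "inj_on (\<lambda>g. replicate (m - 1) (Suc L, L) @ g) {g. above_part L n 1 g \<and> Q g}"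
    by (auto simp: inj_on_def)
  show "(\<lambda>g. replicate (m - 1) (Suc L, L) @ g) ` {g. above_part L n 1 g \<and> Q g} =
      {a. above_part L n m a \<and> no_down_after_up (Suc L) a \<and> Q a}"
    using above_part_replicate_down[of L n _ "m - 1"] above_part_no_down_after_up_decomp[of L n m] assms
    by (fastforce simp: image_iff)
qed

lemma list_all_bd_step_steps_of_iff:
  "list_all bd_step (steps_of \<rho>) \<longleftrightarrow> (\<forall>i. Suc i < length \<rho> \<longrightarrow> bd_step (\<rho> ! i, \<rho> ! Suc i))"
proof
  assume "list_all bd_step (steps_of \<rho>)"
  then show "\<forall>i. Suc i < length \<rho> \<longrightarrow> bd_step (\<rho> ! i, \<rho> ! Suc i)"
    using nth_steps_of[of _ \<rho>] by (auto simp: list_all_length)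
qed (auto simp: list_all_length nth_steps_of)

lemma bd_path_intermediate_value:
  assumes "list_all bd_step (steps_of \<rho>)" "b < length \<rho>" "a \<le> b" "\<rho> ! a \<le> c" "c \<le> \<rho> ! b"
  shows "\<exists>t. a \<le> t \<and> t \<le> b \<and> \<rho> ! t = c"
  using assms(2-5)
proof (induction b)
  case (Suc b)
  show ?case
  proof (cases "\<rho> ! Suc b = c \<or> a = Suc b")
    case False
    with Suc.prems have "c < \<rho> ! Suc b" by simp
    moreover have "bd_step (\<rho> ! b, \<rho> ! Suc b)"
      using assms(1) Suc.prems by (simp add: list_all_bd_step_steps_of_iff)
    ultimately have "c \<le> \<rho> ! b" by (auto simp: bd_step_def)
    with Suc False show ?thesis by (metis Suc_lessD le_Suc_eq)
  qed (use Suc.prems in auto)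
qed auto

definition weak_cutpoint_list :: "nat \<Rightarrow> nat list \<Rightarrow> bool" where
  "weak_cutpoint_list x \<rho> \<longleftrightarrow>
     (\<exists>t<length \<rho>. \<rho> ! t = x \<and> (\<forall>i<t. \<rho> ! i \<le> x) \<and> (\<forall>i. t < i \<and> i < length \<rho> \<longrightarrow> x \<le> \<rho> ! i))"

lemma weak_cutpoint_list_if_no_down_after_up:
  assumes bd: "list_all bd_step (steps_of \<rho>)" and h0: "\<rho> ! 0 = 0" and x: "x < last \<rho>" "\<rho> \<noteq> []"
    and nd: "no_down_after_up x (steps_of \<rho>)"
  shows "weak_cutpoint_list x \<rho>"
proof -
  note bd_nth = bd[unfolded list_all_bd_step_steps_of_iff, rule_format]
  define A where "A = {i. i < length \<rho> \<and> Suc x \<le> \<rho> ! i}"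
  have "length \<rho> - 1 \<in> A" using x by (simp add: A_def last_conv_nth)
  then have aA: "(LEAST i. i \<in> A) \<in> A" by (rule LeastI)
  then obtain u where ua: "Suc u = (LEAST i. i \<in> A)" using h0 by (cases "LEAST i. i \<in> A") (auto simp: A_def)
  have below: "\<rho> ! i \<le> x" if "i \<le> u" for i
    using not_less_Least[of i "\<lambda>i. i \<in> A"] that ua aA by (auto simp: A_def)
  from aA ua have "Suc u < length \<rho>" "Suc x \<le> \<rho> ! Suc u" by (auto simp: A_def)
  with below[of u] bd_nth[of u] have up: "\<rho> ! u = x" "\<rho> ! Suc u = Suc x" by (auto simp: bd_step_def)
  have above: "x \<le> \<rho> ! i" if "u < i" "i < length \<rho>" for i
  proof (rule ccontr)
    assume "\<not> x \<le> \<rho> ! i"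
    then have ex: "\<exists>i. u < i \<and> i < length \<rho> \<and> \<rho> ! i < x" using that by auto
    define b where "b = (LEAST i. u < i \<and> i < length \<rho> \<and> \<rho> ! i < x)"
    have bB: "u < b" "b < length \<rho>" "\<rho> ! b < x" using LeastI_ex[OF ex] by (auto simp: b_def)
    have bmin: "\<not> (u < i \<and> i < length \<rho> \<and> \<rho> ! i < x)" if "i < b" for i
      using not_less_Least[OF that[unfolded b_def]] by (simp add: b_def)
    have "b \<noteq> Suc u" using bB up by auto
    with bB obtain v where bv: "b = Suc v" "Suc u < b" by (cases b) auto
    with bmin[of v] bB have "x \<le> \<rho> ! v" by auto
    with bd_nth[of v] bB bv have down: "\<rho> ! v = x" "\<rho> ! b = x - 1" by (auto simp: bd_step_def)
    have "steps_of \<rho> ! u = (x, Suc x)" "steps_of \<rho> ! v = (x, x - 1)" "u < v" "v < length (steps_of \<rho>)"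
      using up down bv bB \<open>Suc u < length \<rho>\<close> by (auto simp: nth_steps_of)
    with nd show False unfolding no_down_after_up_iff_nth by blast
  qed
  show ?thesis
    unfolding weak_cutpoint_list_def using up below above \<open>Suc u < length \<rho>\<close>
    by (intro exI[of _ u]) auto
qed

lemma no_down_after_up_if_weak_cutpoint_list:
  assumes bd: "list_all bd_step (steps_of \<rho>)" and "weak_cutpoint_list x \<rho>"
  shows "no_down_after_up x (steps_of \<rho>)"
  unfolding no_down_after_up_iff_nth
proof (intro allI impI notI)
  obtain t where t: "t < length \<rho>" "\<rho> ! t = x" "\<forall>i<t. \<rho> ! i \<le> x"
    "\<forall>i. t < i \<and> i < length \<rho> \<longrightarrow> x \<le> \<rho> ! i"
    using assms(2) by (auto simp: weak_cutpoint_list_def)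
  fix u w assume uw: "u < w \<and> w < length (steps_of \<rho>) \<and> steps_of \<rho> ! u = (x, Suc x)"
    and w: "steps_of \<rho> ! w = (x, x - 1)"
  then have "\<rho> ! Suc u = Suc x" "\<rho> ! w = x" "\<rho> ! Suc w = x - 1" "Suc w < length \<rho>"
    by (auto simp: nth_steps_of)
  moreover have "t \<le> u"
  proof (rule ccontr)
    assume "\<not> t \<le> u"
    then have "Suc u = t \<or> Suc u < t" by auto
    with t \<open>\<rho> ! Suc u = Suc x\<close> show False by auto
  qed
  moreover have "bd_step (\<rho> ! w, \<rho> ! Suc w)"
    using bd \<open>Suc w < length \<rho>\<close> by (simp add: list_all_bd_step_steps_of_iff)
  ultimately have "x \<le> x - 1" "0 < x" using t(4)[rule_format, of "Suc w"] uw by (auto simp: bd_step_def)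
  then show False by simp
qed

lemma finite_up_steps_if_weak_cutpoint:
  assumes "weak_cutpoint X (Suc L) \<omega>"
  shows "finite {t. X t \<omega> = L \<and> X (Suc t) \<omega> = Suc L}"
proof -
  obtain t0 where t0: "X t0 \<omega> = Suc L" "\<forall>i>t0. Suc L \<le> X i \<omega>"
    using assms by (auto simp: weak_cutpoint_def)
  have "{t. X t \<omega> = L \<and> X (Suc t) \<omega> = Suc L} \<subseteq> {..<t0}"
  proof
    fix t assume t: "t \<in> {t. X t \<omega> = L \<and> X (Suc t) \<omega> = Suc L}"
    with t0 have "t \<noteq> t0" "\<not> t0 < t" by auto
    then show "t \<in> {..<t0}" by simp
  qed
  then show ?thesis using finite_subset by blast
qed

locale bd_chain =
  fixes M :: "'a measure" and p :: "nat \<Rightarrow> real" and X :: "nat \<Rightarrow> 'a \<Rightarrow> nat"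
  assumes chain: "is_bd_chain M p X" and p0: "p 0 = 1"
    and p_pos: "\<And>k. 1 \<le> k \<Longrightarrow> 0 < p k \<and> p k < 1"
begin

sublocale prob_space M
  using chain by (simp add: is_bd_chain_def)

abbreviation weight_sum :: "steps set \<Rightarrow> ennreal" where
  "weight_sum S \<equiv> \<integral>\<^sup>+ s. ennreal (path_weight p s) \<partial>count_space S"

lemma measurable_X [measurable]: "X t \<in> measurable M (count_space UNIV)"
  using chain by (simp add: is_bd_chain_def)

lemma p_bounds: "0 \<le> p x \<and> p x \<le> 1"
  using p_pos[of x] p0 by (cases "x = 0") auto

lemma bd_trans_le_1: "bd_trans p x y \<le> 1"
  using p_bounds[of x] by (auto simp: bd_trans_def)

lemma bd_trans_pos: "bd_step (x, y) \<Longrightarrow> 0 < bd_trans p x y"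
  using p_pos[of x] p0 by (cases "x = 0") (auto simp: bd_step_def bd_trans_def)

definition cylinder :: "nat list \<Rightarrow> 'a set" where
  "cylinder xs = {\<omega> \<in> space M. \<forall>i<length xs. X i \<omega> = xs ! i}"

definition path_prefix :: "nat \<Rightarrow> 'a \<Rightarrow> nat list" where
  "path_prefix n \<omega> = map (\<lambda>i. X i \<omega>) [0..<n]"

lemma sets_cylinder [measurable]: "cylinder xs \<in> sets M"
  unfolding cylinder_def by measurable

lemma cylinder_nth: "\<omega> \<in> cylinder xs \<Longrightarrow> i < length xs \<Longrightarrow> X i \<omega> = xs ! i"
  by (simp add: cylinder_def)

lemma cylinder_eq: "\<omega> \<in> cylinder xs \<Longrightarrow> \<omega> \<in> cylinder ys \<Longrightarrow> length xs = length ys \<Longrightarrow> xs = ys"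
  by (metis cylinder_nth nth_equalityI)

lemma cylinder_append:
  "cylinder (xs @ ys) = {\<omega> \<in> cylinder xs. \<forall>i<length ys. X (length xs + i) \<omega> = ys ! i}"
proof -
  have "(\<forall>i<length xs + length ys. P i) \<longleftrightarrow> (\<forall>i<length xs. P i) \<and> (\<forall>i<length ys. P (length xs + i))"
    for P :: "nat \<Rightarrow> bool"
  proof safe
    fix i assume "\<forall>i<length xs. P i" "\<forall>i<length ys. P (length xs + i)" "i < length xs + length ys"
    then show "P i" by (cases "i < length xs") (auto dest: spec[of _ "i - length xs"])
  qed auto
  then show ?thesis by (auto simp: cylinder_def nth_append)
qed

lemma length_path_prefix [simp]: "length (path_prefix n \<omega>) = n"
  by (simp add: path_prefix_def)

lemma nth_path_prefix [simp]: "i < n \<Longrightarrow> path_prefix n \<omega> ! i = X i \<omega>"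
  by (simp add: path_prefix_def)

lemma in_cylinder_path_prefix: "\<omega> \<in> space M \<Longrightarrow> \<omega> \<in> cylinder (path_prefix n \<omega>)"
  by (simp add: cylinder_def)

lemma prod_bd_trans_eq_path_weight:
  "(\<Prod>i<length xs - 1. bd_trans p (xs ! i) (xs ! Suc i)) = path_weight p (steps_of xs)"
proof (induction xs rule: induct_list012)
  case (3 x y ys)
  then show ?case by (simp add: prod.lessThan_Suc_shift del: prod.lessThan_Suc)
qed simp_all

lemma measure_cylinder:
  "xs \<noteq> [] \<Longrightarrow> measure M (cylinder xs) = of_bool (hd xs = 0) * path_weight p (steps_of xs)"
  using chain unfolding is_bd_chain_def cylinder_def by (simp add: prod_bd_trans_eq_path_weight[symmetric])

lemma emeasure_cylinder:
  "xs \<noteq> [] \<Longrightarrow> emeasure M (cylinder xs) = ennreal (of_bool (hd xs = 0) * path_weight p (steps_of xs))"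
  by (simp add: emeasure_eq_measure measure_cylinder)

lemma AE_bd_path: "AE \<omega> in M. X 0 \<omega> = 0 \<and> (\<forall>t. bd_step (X t \<omega>, X (Suc t) \<omega>))"
proof (rule AE_I')
  let ?B = "{xs. xs \<noteq> [] \<and> (hd xs \<noteq> 0 \<or> \<not> list_all bd_step (steps_of xs))}"
  show "(\<Union>xs\<in>?B. cylinder xs) \<in> null_sets M"
    by (rule null_sets_UN') (auto simp: null_sets_def emeasure_cylinder path_weight_eq_0)
  show "{\<omega> \<in> space M. \<not> (X 0 \<omega> = 0 \<and> (\<forall>t. bd_step (X t \<omega>, X (Suc t) \<omega>)))} \<subseteq> (\<Union>xs\<in>?B. cylinder xs)"
  proof
    fix \<omega> assume \<omega>: "\<omega> \<in> {\<omega> \<in> space M. \<not> (X 0 \<omega> = 0 \<and> (\<forall>t. bd_step (X t \<omega>, X (Suc t) \<omega>)))}"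
    then obtain t where "X 0 \<omega> \<noteq> 0 \<or> \<not> bd_step (X t \<omega>, X (Suc t) \<omega>)" by auto
    moreover have ne: "path_prefix (Suc (Suc t)) \<omega> \<noteq> []"
      by (metis length_path_prefix list.size(3) nat.distinct(1))
    ultimately have "path_prefix (Suc (Suc t)) \<omega> \<in> ?B"
      by (auto simp: hd_conv_nth list_all_bd_step_steps_of_iff)
    with \<omega> in_cylinder_path_prefix show "\<omega> \<in> (\<Union>xs\<in>?B. cylinder xs)" by blast
  qed
qed

lemma pred_inC [measurable]: "Measurable.pred M (\<lambda>\<omega>. inC C X x \<omega>)"
proof (cases C)
  case (Cab a b)
  show ?thesis unfolding Cab inC.simps xi_def xi_up_def enat_card_eq_iff by measurable
next
  case (Cstar a)
  show ?thesis unfolding Cstar inC.simps xi_up_def enat_card_eq_iff by measurable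
next
  case Cw
  show ?thesis unfolding Cw inC.simps weak_cutpoint_def by measurable
qed

section \<open>Levels visited infinitely often\<close>

lemma emeasure_cylinder_next_neq:
  assumes "xs \<noteq> []"
  shows "emeasure M (cylinder xs \<inter> {\<omega>. X (length xs) \<omega> \<noteq> y})
       = ennreal (1 - bd_trans p (last xs) y) * emeasure M (cylinder xs)"
proof -
  have snoc: "cylinder (xs @ [y]) = cylinder xs \<inter> {\<omega>. X (length xs) \<omega> = y}"
    by (auto simp: cylinder_def nth_append less_Suc_eq)
  have "measure M (cylinder xs \<inter> {\<omega>. X (length xs) \<omega> \<noteq> y}) = measure M (cylinder xs - cylinder (xs @ [y]))"
    by (rule arg_cong[where f = "measure M"]) (auto simp: snoc)
  also have "\<dots> = measure M (cylinder xs) - measure M (cylinder (xs @ [y]))"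
    by (rule finite_measure_Diff) (auto simp: cylinder_def nth_append)
  also have "\<dots> = (1 - bd_trans p (last xs) y) * measure M (cylinder xs)"
    using assms by (simp add: measure_cylinder steps_of_append hd_append algebra_simps)
  finally show ?thesis
    using bd_trans_le_1 by (simp add: emeasure_eq_measure ennreal_mult'')
qed

definition visits_from :: "nat \<Rightarrow> nat \<Rightarrow> nat list \<Rightarrow> nat" where
  "visits_from j s xs = card {t \<in> {s..<length xs - 1}. xs ! t = j}"

text \<open>Prefixes of paths that visit \<open>j\<close> more than \<open>r\<close> times from time \<open>s\<close> on without taking the
  step \<open>(j, j')\<close>, cut at the \<open>(r + 1)\<close>-st such visit.  Each visit is another chance
  \<open>bd_trans p j j'\<close> for that step, whence the geometric bound below.\<close>

definition avoiding_prefixes :: "nat \<Rightarrow> nat \<Rightarrow> nat \<Rightarrow> nat \<Rightarrow> nat list set" where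
  "avoiding_prefixes j j' s r = {xs. s < length xs \<and> last xs = j \<and> visits_from j s xs = r \<and>
      (\<forall>t\<in>{s..<length xs - 1}. xs ! t = j \<longrightarrow> xs ! Suc t \<noteq> j')}"

definition avoiding_event :: "nat \<Rightarrow> nat \<Rightarrow> nat \<Rightarrow> nat \<Rightarrow> 'a set" where
  "avoiding_event j j' s r = (\<Union>xs\<in>avoiding_prefixes j j' s r. cylinder xs)"

lemma sets_avoiding_event [measurable]: "avoiding_event j j' s r \<in> sets M"
  unfolding avoiding_event_def by (intro sets.countable_UN') auto

lemma avoiding_prefixes_not_prefix:
  assumes "xs \<in> avoiding_prefixes j j' s r" "ys \<in> avoiding_prefixes j j' s r"
    and "\<omega> \<in> cylinder xs" "\<omega> \<in> cylinder ys"
  shows "\<not> length xs < length ys"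
proof
  assume l: "length xs < length ys"
  let ?t0 = "length xs - 1"
  let ?A = "{t \<in> {s..<length xs - 1}. xs ! t = j}"
  let ?B = "{t \<in> {s..<length ys - 1}. ys ! t = j}"
  have x: "s < length xs" "last xs = j" "card ?A = r" and "card ?B = r"
    using assms(1,2) by (auto simp: avoiding_prefixes_def visits_from_def)
  have same: "ys ! t = xs ! t" if "t < length xs" for t
    using cylinder_nth[OF assms(3) that] cylinder_nth[OF assms(4)] that l by simp
  have "xs \<noteq> []" using x by auto
  then have "xs ! ?t0 = j" using x by (simp add: last_conv_nth)
  then have "insert ?t0 ?A \<subseteq> ?B" using l x same by auto
  then have "card (insert ?t0 ?A) \<le> card ?B" by (intro card_mono) auto
  with x \<open>card ?B = r\<close> show False by simp
qed

lemma disjoint_family_on_avoiding_prefixes: "disjoint_family_on cylinder (avoiding_prefixes j j' s r)"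
  unfolding disjoint_family_on_def
proof (intro ballI impI)
  fix xs ys assume xs: "xs \<in> avoiding_prefixes j j' s r" and ys: "ys \<in> avoiding_prefixes j j' s r"
    and "xs \<noteq> ys"
  then show "cylinder xs \<inter> cylinder ys = {}"
    using avoiding_prefixes_not_prefix[OF xs ys] avoiding_prefixes_not_prefix[OF ys xs] cylinder_eq
    by (metis disjoint_iff_not_equal linorder_neqE_nat)
qed

lemma avoiding_event_Suc_subset:
  "avoiding_event j j' s (Suc r) \<subseteq>
    (\<Union>xs\<in>avoiding_prefixes j j' s r. cylinder xs \<inter> {\<omega>. X (length xs) \<omega> \<noteq> j'})"
proof
  fix \<omega> assume "\<omega> \<in> avoiding_event j j' s (Suc r)"
  then obtain ys where ys: "ys \<in> avoiding_prefixes j j' s (Suc r)" and \<omega>: "\<omega> \<in> cylinder ys"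
    by (auto simp: avoiding_event_def)
  let ?A = "{t \<in> {s..<length ys - 1}. ys ! t = j}"
  have "card ?A = Suc r" using ys by (simp add: avoiding_prefixes_def visits_from_def)
  then have "?A \<noteq> {}" by (metis card.empty nat.distinct(1))
  define \<tau> where "\<tau> = Max ?A"
  have \<tau>: "s \<le> \<tau>" "\<tau> < length ys - 1" "ys ! \<tau> = j" and \<tau>_max: "\<And>t. t \<in> ?A \<Longrightarrow> t \<le> \<tau>"
    using Max_in[of ?A] \<open>?A \<noteq> {}\<close> by (auto simp: \<tau>_def)
  have avoid: "\<forall>t\<in>{s..<length ys - 1}. ys ! t = j \<longrightarrow> ys ! Suc t \<noteq> j'"
    using ys by (simp add: avoiding_prefixes_def)
  define xs where "xs = take (Suc \<tau>) ys"
  have xs: "length xs = Suc \<tau>" "\<And>t. t < Suc \<tau> \<Longrightarrow> xs ! t = ys ! t"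
    using \<tau> by (simp_all add: xs_def)
  have "{t \<in> {s..<length xs - 1}. xs ! t = j} = ?A - {\<tau>}"
    using xs \<tau> \<tau>_max by force
  then have "visits_from j s xs = r"
    using \<open>card ?A = Suc r\<close> Max_in[of ?A] \<open>?A \<noteq> {}\<close> by (simp add: visits_from_def \<tau>_def)
  moreover have "xs \<noteq> []" using xs by auto
  then have "last xs = j" using xs \<tau> by (simp add: last_conv_nth)
  ultimately have "xs \<in> avoiding_prefixes j j' s r"
    using xs \<tau> avoid by (auto simp: avoiding_prefixes_def)
  moreover have "\<omega> \<in> cylinder xs" using \<omega> xs \<tau> by (auto simp: cylinder_def xs_def)
  moreover have "X (length xs) \<omega> \<noteq> j'"
    using cylinder_nth[OF \<omega>, of "Suc \<tau>"] avoid \<tau> xs by auto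
  ultimately show "\<omega> \<in> (\<Union>xs\<in>avoiding_prefixes j j' s r. cylinder xs \<inter> {\<omega>. X (length xs) \<omega> \<noteq> j'})"
    by blast
qed

lemma emeasure_avoiding_event_le:
  "emeasure M (avoiding_event j j' s r) \<le> ennreal ((1 - bd_trans p j j') ^ r)"
proof (induction r)
  case 0
  then show ?case by (simp add: emeasure_space_1[symmetric] emeasure_space)
next
  case (Suc r)
  let ?c = "bd_trans p j j'"
  let ?P = "avoiding_prefixes j j' s r"
  have sets: "cylinder xs \<inter> {\<omega>. X (length xs) \<omega> \<noteq> j'} \<in> sets M" for xs
  proof -
    have "cylinder xs \<inter> {\<omega>. X (length xs) \<omega> \<noteq> j'} = cylinder xs \<inter> {\<omega>\<in>space M. X (length xs) \<omega> \<noteq> j'}"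
      by (auto simp: cylinder_def)
    then show ?thesis by simp
  qed
  have "emeasure M (avoiding_event j j' s (Suc r))
      \<le> emeasure M (\<Union>xs\<in>?P. cylinder xs \<inter> {\<omega>. X (length xs) \<omega> \<noteq> j'})"
    by (intro emeasure_mono avoiding_event_Suc_subset sets.countable_UN') (auto intro: sets)
  also have "\<dots> = (\<integral>\<^sup>+ xs. emeasure M (cylinder xs \<inter> {\<omega>. X (length xs) \<omega> \<noteq> j'}) \<partial>count_space ?P)"
    using disjoint_family_on_avoiding_prefixes[of j j' s r]
    by (intro emeasure_UN_countable) (auto intro: sets simp: disjoint_family_on_def)
  also have "\<dots> = (\<integral>\<^sup>+ xs. ennreal (1 - ?c) * emeasure M (cylinder xs) \<partial>count_space ?P)"
  proof (intro nn_integral_cong)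
    fix xs assume "xs \<in> space (count_space ?P)"
    then have "xs \<noteq> []" "last xs = j" by (auto simp: avoiding_prefixes_def)
    then show "emeasure M (cylinder xs \<inter> {\<omega>. X (length xs) \<omega> \<noteq> j'}) = ennreal (1 - ?c) * emeasure M (cylinder xs)"
      by (simp add: emeasure_cylinder_next_neq)
  qed
  also have "\<dots> = ennreal (1 - ?c) * emeasure M (avoiding_event j j' s r)"
    unfolding avoiding_event_def
    by (simp add: nn_integral_cmult emeasure_UN_countable disjoint_family_on_avoiding_prefixes)
  also have "\<dots> \<le> ennreal (1 - ?c) * ennreal ((1 - ?c) ^ r)"
    by (rule mult_left_mono[OF Suc.IH]) simp
  also have "\<dots> = ennreal ((1 - ?c) ^ Suc r)"
    using bd_trans_le_1 by (simp add: ennreal_mult[symmetric])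
  finally show ?case .
qed

lemma null_sets_INT_avoiding_event:
  assumes "bd_step (j, j')"
  shows "(\<Inter>r. avoiding_event j j' s r) \<in> null_sets M"
proof -
  let ?c = "bd_trans p j j'"
  have c: "0 < ?c" "?c \<le> 1" using bd_trans_pos[OF assms] bd_trans_le_1 by auto
  have le: "measure M (\<Inter>r. avoiding_event j j' s r) \<le> (1 - ?c) ^ r" for r
  proof -
    have "emeasure M (\<Inter>r. avoiding_event j j' s r) \<le> emeasure M (avoiding_event j j' s r)"
      by (rule emeasure_mono) auto
    also have "\<dots> \<le> ennreal ((1 - ?c) ^ r)" by (rule emeasure_avoiding_event_le)
    finally show ?thesis using c by (simp add: emeasure_eq_measure)
  qed
  have "(\<lambda>r. (1 - ?c) ^ r) \<longlonglongrightarrow> 0" using c by (intro LIMSEQ_power_zero) auto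
  then have "measure M (\<Inter>r. avoiding_event j j' s r) \<le> 0"
    by (rule LIMSEQ_le_const) (use le in auto)
  then have "measure M (\<Inter>r. avoiding_event j j' s r) = 0" by (simp add: antisym)
  then show ?thesis by (simp add: emeasure_eq_measure null_sets_def)
qed

lemma in_avoiding_event_if_finite_steps:
  assumes \<omega>: "\<omega> \<in> space M" and inf: "infinite {t. X t \<omega> = j}"
    and s: "{t. X t \<omega> = j \<and> X (Suc t) \<omega> = j'} \<subseteq> {..<s}"
  shows "\<omega> \<in> avoiding_event j j' s r"
proof -
  obtain \<tau> where \<tau>: "X \<tau> \<omega> = j" "s \<le> \<tau>" "card {t \<in> {s..<\<tau>}. X t \<omega> = j} = r"
    using infinite_ex_card_before[OF inf, of s r] by auto
  let ?ys = "path_prefix (Suc \<tau>) \<omega>"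
  have "{t \<in> {s..<length ?ys - 1}. ?ys ! t = j} = {t \<in> {s..<\<tau>}. X t \<omega> = j}" by auto
  moreover have "last ?ys = j" using \<tau> by (simp add: path_prefix_def)
  moreover have "\<forall>t\<in>{s..<length ?ys - 1}. ?ys ! t = j \<longrightarrow> ?ys ! Suc t \<noteq> j'" using s by auto
  ultimately have "?ys \<in> avoiding_prefixes j j' s r"
    using \<tau> by (simp add: avoiding_prefixes_def visits_from_def)
  with in_cylinder_path_prefix[OF \<omega>] show ?thesis by (auto simp: avoiding_event_def)
qed

lemma AE_infinite_visits_imp_infinite_steps:
  assumes "bd_step (j, j')"
  shows "AE \<omega> in M. infinite {t. X t \<omega> = j} \<longrightarrow> infinite {t. X t \<omega> = j \<and> X (Suc t) \<omega> = j'}"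
proof (rule AE_I')
  show "(\<Union>s. \<Inter>r. avoiding_event j j' s r) \<in> null_sets M"
    using null_sets_INT_avoiding_event[OF assms] by (rule null_sets_UN)
  show "{\<omega> \<in> space M. \<not> (infinite {t. X t \<omega> = j} \<longrightarrow> infinite {t. X t \<omega> = j \<and> X (Suc t) \<omega> = j'})}
      \<subseteq> (\<Union>s. \<Inter>r. avoiding_event j j' s r)"
  proof
    fix \<omega> assume "\<omega> \<in> {\<omega> \<in> space M. \<not> (infinite {t. X t \<omega> = j} \<longrightarrow> infinite {t. X t \<omega> = j \<and> X (Suc t) \<omega> = j'})}"
    then have "\<omega> \<in> space M" "infinite {t. X t \<omega> = j}" "finite {t. X t \<omega> = j \<and> X (Suc t) \<omega> = j'}"
      by auto
    moreover obtain s where "{t. X t \<omega> = j \<and> X (Suc t) \<omega> = j'} \<subseteq> {..<s}"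
      using finite_nat_bounded[OF \<open>finite _\<close>] by blast
    ultimately show "\<omega> \<in> (\<Union>s. \<Inter>r. avoiding_event j j' s r)"
      using in_avoiding_event_if_finite_steps by blast
  qed
qed

section \<open>Decomposition at the last exit\<close>

definition escape_event :: "nat \<Rightarrow> nat list \<Rightarrow> 'a set" where
  "escape_event n \<rho> = {\<omega> \<in> cylinder \<rho>. \<forall>t \<ge> length \<rho> - 1. n < X t \<omega>}"

definition escape_event_upto :: "nat \<Rightarrow> nat list \<Rightarrow> nat \<Rightarrow> 'a set" where
  "escape_event_upto n \<rho> s = {\<omega> \<in> cylinder \<rho>. \<forall>t\<in>{length \<rho>..<length \<rho> + s}. n < X t \<omega>}"

definition above_lists :: "nat \<Rightarrow> nat \<Rightarrow> nat list set" where
  "above_lists n s = {\<tau>. length \<tau> = s \<and> (\<forall>x\<in>set \<tau>. n < x)}"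

text \<open>\<open>stay_above n\<close> is the probability that the chain started at \<open>n + 1\<close> never visits \<open>n\<close>.\<close>

definition stay_above :: "nat \<Rightarrow> ennreal" where
  "stay_above n =
     (INF s. \<integral>\<^sup>+ \<tau>. ennreal (path_weight p (steps_of (Suc n # \<tau>))) \<partial>count_space (above_lists n s))"

lemma escape_event_upto_eq: "escape_event_upto n \<rho> s = (\<Union>\<tau>\<in>above_lists n s. cylinder (\<rho> @ \<tau>))"
proof
  show "escape_event_upto n \<rho> s \<subseteq> (\<Union>\<tau>\<in>above_lists n s. cylinder (\<rho> @ \<tau>))"
  proof
    fix \<omega> assume \<omega>: "\<omega> \<in> escape_event_upto n \<rho> s"
    define \<tau> where "\<tau> = map (\<lambda>i. X (length \<rho> + i) \<omega>) [0..<s]"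
    have "\<tau> \<in> above_lists n s" "\<omega> \<in> cylinder (\<rho> @ \<tau>)"
      using \<omega> by (auto simp: above_lists_def \<tau>_def escape_event_upto_def cylinder_append)
    then show "\<omega> \<in> (\<Union>\<tau>\<in>above_lists n s. cylinder (\<rho> @ \<tau>))" by blast
  qed
  show "(\<Union>\<tau>\<in>above_lists n s. cylinder (\<rho> @ \<tau>)) \<subseteq> escape_event_upto n \<rho> s"
  proof (intro subsetI, elim UN_E)
    fix \<omega> \<tau> assume \<tau>: "\<tau> \<in> above_lists n s" and \<omega>: "\<omega> \<in> cylinder (\<rho> @ \<tau>)"
    have "n < X t \<omega>" if "t \<in> {length \<rho>..<length \<rho> + s}" for t
    proof -
      have "\<forall>i<length \<tau>. X (length \<rho> + i) \<omega> = \<tau> ! i" using \<omega> by (simp add: cylinder_append)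
      moreover have "t - length \<rho> < length \<tau>" using \<tau> that by (auto simp: above_lists_def)
      ultimately have "X (length \<rho> + (t - length \<rho>)) \<omega> = \<tau> ! (t - length \<rho>)" by blast
      moreover have "\<tau> ! (t - length \<rho>) \<in> set \<tau>" using \<open>t - length \<rho> < length \<tau>\<close> by simp
      ultimately show ?thesis using \<tau> that by (auto simp: above_lists_def)
    qed
    with \<omega> show "\<omega> \<in> escape_event_upto n \<rho> s" by (auto simp: escape_event_upto_def cylinder_append)
  qed
qed

lemma emeasure_escape_event_upto:
  assumes "\<rho> \<noteq> []" "hd \<rho> = 0" "last \<rho> = Suc n"
  shows "emeasure M (escape_event_upto n \<rho> s) = ennreal (path_weight p (steps_of \<rho>)) *
    (\<integral>\<^sup>+ \<tau>. ennreal (path_weight p (steps_of (Suc n # \<tau>))) \<partial>count_space (above_lists n s))"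
proof -
  have "emeasure M (escape_event_upto n \<rho> s) = (\<integral>\<^sup>+ \<tau>. emeasure M (cylinder (\<rho> @ \<tau>)) \<partial>count_space (above_lists n s))"
    unfolding escape_event_upto_eq
  proof (rule emeasure_UN_countable)
    show "disjoint_family_on (\<lambda>\<tau>. cylinder (\<rho> @ \<tau>)) (above_lists n s)"
      unfolding disjoint_family_on_def above_lists_def using cylinder_eq by fastforce
  qed auto
  also have "\<dots> = (\<integral>\<^sup>+ \<tau>. ennreal (path_weight p (steps_of \<rho>)) * ennreal (path_weight p (steps_of (Suc n # \<tau>)))
      \<partial>count_space (above_lists n s))"
    using assms by (intro nn_integral_cong)
      (simp add: emeasure_cylinder steps_of_append ennreal_mult path_weight_nonneg[OF p_bounds])
  finally show ?thesis by (simp add: nn_integral_cmult)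
qed

lemma escape_event_eq_INT: "last \<rho> = Suc n \<Longrightarrow> \<rho> \<noteq> [] \<Longrightarrow> escape_event n \<rho> = (\<Inter>s. escape_event_upto n \<rho> s)"
proof (intro equalityI subsetI)
  fix \<omega> assume "\<omega> \<in> (\<Inter>s. escape_event_upto n \<rho> s)" "last \<rho> = Suc n" "\<rho> \<noteq> []"
  then have \<omega>: "\<omega> \<in> cylinder \<rho>" "\<And>s t. t \<in> {length \<rho>..<length \<rho> + s} \<Longrightarrow> n < X t \<omega>"
    by (auto simp: escape_event_upto_def)
  have "n < X t \<omega>" if "length \<rho> - 1 \<le> t" for t
  proof (cases "t = length \<rho> - 1")
    case True
    with \<omega>(1) \<open>\<rho> \<noteq> []\<close> have "X t \<omega> = last \<rho>" by (simp add: cylinder_nth last_conv_nth)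
    with \<open>last \<rho> = Suc n\<close> show ?thesis by simp
  next
    case False
    with that \<omega>(2)[of t "Suc t"] show ?thesis by auto
  qed
  with \<omega> show "\<omega> \<in> escape_event n \<rho>" by (auto simp: escape_event_def)
qed (auto simp: escape_event_def escape_event_upto_def)

lemma emeasure_escape_event:
  assumes "\<rho> \<noteq> []" "hd \<rho> = 0" "last \<rho> = Suc n"
  shows "emeasure M (escape_event n \<rho>) = ennreal (path_weight p (steps_of \<rho>)) * stay_above n"
proof -
  have "emeasure M (escape_event n \<rho>) = (INF s. emeasure M (escape_event_upto n \<rho> s))"
    unfolding escape_event_eq_INT[OF assms(3,1)]
  proof (rule INF_emeasure_decseq[symmetric])
    show "decseq (escape_event_upto n \<rho>)" by (auto simp: decseq_def escape_event_upto_def)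
    show "range (escape_event_upto n \<rho>) \<subseteq> sets M"
      unfolding escape_event_upto_eq by (auto intro!: sets.countable_UN')
  qed simp
  also have "\<dots> = ennreal (path_weight p (steps_of \<rho>)) * stay_above n"
    unfolding stay_above_def emeasure_escape_event_upto[OF assms] by (simp add: ennreal_mult_INF)
  finally show ?thesis .
qed

lemma sets_escape_event [measurable]: "escape_event n \<rho> \<in> sets M"
proof -
  have "escape_event n \<rho> = cylinder \<rho> \<inter> {\<omega> \<in> space M. \<forall>t. length \<rho> - 1 \<le> t \<longrightarrow> n < X t \<omega>}"
    by (auto simp: escape_event_def cylinder_def)
  also have "\<dots> \<in> sets M" by measurable
  finally show ?thesis .
qed

definition exit_paths :: "nat \<Rightarrow> nat list set" where
  "exit_paths n = {\<rho>. 2 \<le> length \<rho> \<and> exit_steps n (steps_of \<rho>)}"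

lemma exit_paths_D:
  assumes "\<rho> \<in> exit_paths n"
  shows "\<rho> \<noteq> []" "hd \<rho> = 0" "\<rho> ! 0 = 0" "last \<rho> = Suc n" "\<rho> ! (length \<rho> - 2) = n"
    "list_all bd_step (steps_of \<rho>)"
proof -
  have l: "2 \<le> length \<rho>" and s: "exit_steps n (steps_of \<rho>)" using assms by (auto simp: exit_paths_def)
  then show ne: "\<rho> \<noteq> []" by auto
  from s have "steps_of \<rho> \<noteq> []" "chain_from 0 (steps_of \<rho>)" by (auto simp: exit_steps_def)
  then have "fst (hd (steps_of \<rho>)) = 0" by (cases "steps_of \<rho>") auto
  with hd_steps_of[OF l] show "hd \<rho> = 0" by simp
  with ne show "\<rho> ! 0 = 0" by (simp add: hd_conv_nth)
  from s last_steps_of[OF l] show "last \<rho> = Suc n" "\<rho> ! (length \<rho> - 2) = n"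
    by (auto simp: exit_steps_def)
  from s show "list_all bd_step (steps_of \<rho>)" by (simp add: exit_steps_def)
qed

lemma escape_event_D:
  assumes "\<omega> \<in> escape_event n \<rho>"
  shows "\<omega> \<in> space M" "\<And>t. t < length \<rho> \<Longrightarrow> X t \<omega> = \<rho> ! t" "\<And>t. length \<rho> - 1 \<le> t \<Longrightarrow> n < X t \<omega>"
  using assms by (auto simp: escape_event_def cylinder_def)

lemma disjoint_family_on_escape_event: "disjoint_family_on (escape_event n) (exit_paths n)"
proof -
  have False if \<rho>: "\<rho> \<in> exit_paths n" "\<rho>' \<in> exit_paths n" and \<omega>: "\<omega> \<in> escape_event n \<rho>" "\<omega> \<in> escape_event n \<rho>'"
    and l: "length \<rho> < length \<rho>'" for \<rho> \<rho>' \<omega>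
  proof -
    have "2 \<le> length \<rho>" using \<rho> by (simp add: exit_paths_def)
    then have "n < X (length \<rho>' - 2) \<omega>" using escape_event_D(3)[OF \<omega>(1)] l by simp
    moreover have "X (length \<rho>' - 2) \<omega> = n"
      using escape_event_D(2)[OF \<omega>(2), of "length \<rho>' - 2"] exit_paths_D(5)[OF \<rho>(2)] l by simp
    ultimately show False by simp
  qed
  moreover have "\<rho> = \<rho>'" if "\<omega> \<in> escape_event n \<rho>" "\<omega> \<in> escape_event n \<rho>'" "length \<rho> = length \<rho>'"
    for \<rho> \<rho>' \<omega>
    using that cylinder_eq by (auto simp: escape_event_def)
  ultimately show ?thesis
    unfolding disjoint_family_on_def by (metis disjoint_iff linorder_neqE_nat)
qed

lemma visits_escape_event:
  assumes \<rho>: "\<rho> \<in> exit_paths n" and \<omega>: "\<omega> \<in> escape_event n \<rho>" and x: "x \<le> n"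
  shows "{t. X t \<omega> = x} = {i. i < length (steps_of \<rho>) \<and> fst (steps_of \<rho> ! i) = x}"
    and "{t. X t \<omega> = x \<and> X (Suc t) \<omega> = Suc x} =
      {i. i < length (steps_of \<rho>) \<and> steps_of \<rho> ! i = (x, Suc x)}"
proof -
  have before: "Suc t < length \<rho>" if "X t \<omega> = x" for t
    using escape_event_D(3)[OF \<omega>, of t] that x by (cases "length \<rho> - 1 \<le> t") auto
  note on_\<rho> = escape_event_D(2)[OF \<omega>]
  show "{t. X t \<omega> = x} = {i. i < length (steps_of \<rho>) \<and> fst (steps_of \<rho> ! i) = x}"
  proof (intro set_eqI iffI)
    fix t assume "t \<in> {t. X t \<omega> = x}"
    with before[of t] on_\<rho>[of t] show "t \<in> {i. i < length (steps_of \<rho>) \<and> fst (steps_of \<rho> ! i) = x}"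
      by (auto simp: nth_steps_of)
  qed (use on_\<rho> in \<open>auto simp: nth_steps_of\<close>)
  show "{t. X t \<omega> = x \<and> X (Suc t) \<omega> = Suc x} = {i. i < length (steps_of \<rho>) \<and> steps_of \<rho> ! i = (x, Suc x)}"
  proof (intro set_eqI iffI)
    fix t assume "t \<in> {t. X t \<omega> = x \<and> X (Suc t) \<omega> = Suc x}"
    with before[of t] on_\<rho>[of t] on_\<rho>[of "Suc t"]
    show "t \<in> {i. i < length (steps_of \<rho>) \<and> steps_of \<rho> ! i = (x, Suc x)}"
      by (auto simp: nth_steps_of)
  qed (use on_\<rho> in \<open>auto simp: nth_steps_of\<close>)
qed

lemma weak_cutpoint_iff_escape_event:
  assumes \<rho>: "\<rho> \<in> exit_paths n" and \<omega>: "\<omega> \<in> escape_event n \<rho>" and x: "x \<le> n"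
  shows "weak_cutpoint X x \<omega> \<longleftrightarrow> weak_cutpoint_list x \<rho>"
proof
  assume "weak_cutpoint X x \<omega>"
  then obtain t where t: "X t \<omega> = x" "\<forall>i<t. X i \<omega> \<le> x" "\<forall>i>t. x \<le> X i \<omega>"
    by (auto simp: weak_cutpoint_def)
  have "t < length \<rho>" using escape_event_D(3)[OF \<omega>, of t] t x by (cases "length \<rho> - 1 \<le> t") auto
  with t escape_event_D(2)[OF \<omega>] show "weak_cutpoint_list x \<rho>"
    unfolding weak_cutpoint_list_def by (intro exI[of _ t]) auto
next
  assume "weak_cutpoint_list x \<rho>"
  then obtain t where t: "t < length \<rho>" "\<rho> ! t = x" "\<forall>i<t. \<rho> ! i \<le> x"
    "\<forall>i. t < i \<and> i < length \<rho> \<longrightarrow> x \<le> \<rho> ! i"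
    by (auto simp: weak_cutpoint_list_def)
  have "x \<le> X i \<omega>" if "t < i" for i
  proof (cases "i < length \<rho>")
    case False
    then have "length \<rho> - 1 \<le> i" by simp
    with escape_event_D(3)[OF \<omega>] x show ?thesis by fastforce
  qed (use t that escape_event_D(2)[OF \<omega>] in auto)
  with t escape_event_D(2)[OF \<omega>] show "weak_cutpoint X x \<omega>"
    unfolding weak_cutpoint_def by (intro exI[of _ t]) auto
qed

lemma inC_iff_inC_steps:
  assumes \<rho>: "\<rho> \<in> exit_paths n" and \<omega>: "\<omega> \<in> escape_event n \<rho>" and x: "x \<le> n"
  shows "inC C X x \<omega> \<longleftrightarrow> inC_steps C x (steps_of \<rho>)"
proof -
  have "xi X x \<omega> = enat (length (steps_at x (steps_of \<rho>)))"
    unfolding xi_def visits_escape_event(1)[OF assms] steps_at_def length_filter_conv_card by simp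
  moreover have "xi_up X x \<omega> = enat (count_list (steps_of \<rho>) (x, Suc x))"
    unfolding xi_up_def visits_escape_event(2)[OF assms] count_list_eq_length_filter length_filter_conv_card
    by (simp add: eq_commute)
  moreover have "no_down_after_up x (steps_of \<rho>) \<longleftrightarrow> weak_cutpoint_list x \<rho>"
    using exit_paths_D[OF \<rho>] x weak_cutpoint_list_if_no_down_after_up[of \<rho> x]
      no_down_after_up_if_weak_cutpoint_list[of \<rho> x]
    by auto
  ultimately show ?thesis
    using weak_cutpoint_iff_escape_event[OF assms] by (cases C) (auto simp: inC_steps_def)
qed

definition regular :: "'a \<Rightarrow> bool" where
  "regular \<omega> \<longleftrightarrow> X 0 \<omega> = 0 \<and> (\<forall>t. bd_step (X t \<omega>, X (Suc t) \<omega>)) \<and>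
     (\<forall>j j'. bd_step (j, j') \<longrightarrow> infinite {t. X t \<omega> = j} \<longrightarrow> infinite {t. X t \<omega> = j \<and> X (Suc t) \<omega> = j'})"

lemma AE_regular: "AE \<omega> in M. regular \<omega>"
proof -
  have "AE \<omega> in M. \<forall>j j'. bd_step (j, j') \<longrightarrow>
      infinite {t. X t \<omega> = j} \<longrightarrow> infinite {t. X t \<omega> = j \<and> X (Suc t) \<omega> = j'}"
    by (simp add: AE_all_countable AE_infinite_visits_imp_infinite_steps)
  with AE_bd_path show ?thesis unfolding regular_def by eventually_elim auto
qed

lemma regular_intermediate_value:
  assumes "regular \<omega>" "a \<le> b" "X a \<omega> \<le> c" "c \<le> X b \<omega>"
  shows "\<exists>t. a \<le> t \<and> t \<le> b \<and> X t \<omega> = c"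
proof -
  have "list_all bd_step (steps_of (path_prefix (Suc b) \<omega>))"
    using assms(1) by (simp add: list_all_bd_step_steps_of_iff regular_def)
  from bd_path_intermediate_value[OF this, of b a c] assms show ?thesis by auto
qed

lemma regular_infinite_visits_step:
  assumes "regular \<omega>" "bd_step (j, j')" "infinite {t. X t \<omega> = j}"
  shows "infinite {t. X t \<omega> = j'}"
proof -
  have "infinite {t. X t \<omega> = j \<and> X (Suc t) \<omega> = j'}" using assms by (simp add: regular_def)
  then have "infinite (Suc ` {t. X t \<omega> = j \<and> X (Suc t) \<omega> = j'})" by (simp add: finite_image_iff)
  moreover have "Suc ` {t. X t \<omega> = j \<and> X (Suc t) \<omega> = j'} \<subseteq> {t. X t \<omega> = j'}" by auto
  ultimately show ?thesis using finite_subset by blast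
qed

lemma regular_finite_visits:
  assumes \<omega>: "regular \<omega>" and fin: "finite {t. X t \<omega> = L \<and> X (Suc t) \<omega> = Suc L}"
  shows "finite {t. X t \<omega> = x}"
proof (rule ccontr)
  assume inf: "infinite {t. X t \<omega> = x}"
  have up: "infinite {t. X t \<omega> = x + d}" for d
    by (induction d) (use inf regular_infinite_visits_step[OF \<omega>] in \<open>auto simp: bd_step_def\<close>)
  have down: "infinite {t. X t \<omega> = x - d}" if "d \<le> x" for d
    using that
  proof (induction d)
    case (Suc d)
    then have "bd_step (x - d, x - Suc d)" by (auto simp: bd_step_def)
    with Suc regular_infinite_visits_step[OF \<omega>] show ?case by simp
  qed (use inf in simp)
  have "infinite {t. X t \<omega> = L}"
    using up[of "L - x"] down[of "x - L"] by (cases "x \<le> L") simp_all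
  with \<omega> fin show False by (simp add: regular_def bd_step_def)
qed

lemma regular_last_exit:
  assumes \<omega>: "regular \<omega>" and fin: "finite {t. X t \<omega> = L \<and> X (Suc t) \<omega> = Suc L}"
  obtains T where "X T \<omega> = n" "X (Suc T) \<omega> = Suc n" "\<And>t. T < t \<Longrightarrow> n < X t \<omega>"
proof -
  have "finite (\<Union>x\<le>n. {t. X t \<omega> = x})" using regular_finite_visits[OF \<omega> fin] by auto
  then obtain T0 where T0: "(\<Union>x\<le>n. {t. X t \<omega> = x}) \<subseteq> {..<T0}" using finite_nat_bounded by blast
  have late: "n < X t \<omega>" if "T0 \<le> t" for t
  proof (rule ccontr)
    assume "\<not> n < X t \<omega>"
    then have "t \<in> (\<Union>x\<le>n. {t. X t \<omega> = x})" by auto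
    with T0 that show False by auto
  qed
  have "X 0 \<omega> = 0" using \<omega> by (simp add: regular_def)
  then have ne: "{t. X t \<omega> = n} \<noteq> {}"
    using regular_intermediate_value[OF \<omega>, of 0 T0 n] late[of T0] by auto
  have fin_n: "finite {t. X t \<omega> = n}" using regular_finite_visits[OF \<omega> fin] .
  define T where "T = Max {t. X t \<omega> = n}"
  have XT: "X T \<omega> = n" using Max_in[OF fin_n ne] by (simp add: T_def)
  have T_max: "t \<le> T" if "X t \<omega> = n" for t using Max_ge[OF fin_n] that by (simp add: T_def)
  have after: "n < X t \<omega>" if "T < t" for t
  proof (rule ccontr)
    assume "\<not> n < X t \<omega>"
    moreover have "X t \<omega> \<noteq> n" using T_max that by fastforce
    ultimately have "X t \<omega> \<le> n" "n \<le> X (t + T0) \<omega>" using late[of "t + T0"] by auto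
    from regular_intermediate_value[OF \<omega> le_add1 this]
    obtain t' where "t \<le> t'" "X t' \<omega> = n" by blast
    with T_max that show False by fastforce
  qed
  moreover have "X (Suc T) \<omega> = Suc n"
    using \<omega> XT after[of "Suc T"] by (auto simp: regular_def bd_step_def dest: spec[of _ T])
  ultimately show ?thesis using XT that by blast
qed

lemma regular_escape:
  assumes \<omega>: "regular \<omega>" "\<omega> \<in> space M" and fin: "finite {t. X t \<omega> = L \<and> X (Suc t) \<omega> = Suc L}"
  shows "\<exists>\<rho>\<in>exit_paths n. \<omega> \<in> escape_event n \<rho>"
proof -
  obtain T where XT: "X T \<omega> = n" "X (Suc T) \<omega> = Suc n" and after: "\<And>t. T < t \<Longrightarrow> n < X t \<omega>"
    using regular_last_exit[OF \<omega>(1) fin, of n] by blast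
  define \<rho> where "\<rho> = path_prefix (Suc (Suc T)) \<omega>"
  have "chain_from 0 (steps_of \<rho>)"
    using chain_from_steps_of[of 0 "map (\<lambda>i. X i \<omega>) [1..<Suc (Suc T)]"] \<omega>(1)
    by (simp add: \<rho>_def path_prefix_def upt_conv_Cons regular_def del: upt_Suc)
  moreover have "list_all bd_step (steps_of \<rho>)"
    using \<omega>(1) by (simp add: \<rho>_def list_all_bd_step_steps_of_iff regular_def)
  moreover have "last (steps_of \<rho>) = (n, Suc n)"
  proof -
    have "last \<rho> = X (Suc T) \<omega>" by (simp add: \<rho>_def path_prefix_def)
    then show ?thesis using last_steps_of[of \<rho>] XT by (simp add: \<rho>_def)
  qed
  moreover have "steps_of \<rho> \<noteq> []" by (simp add: \<rho>_def flip: length_0_conv)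
  ultimately have "\<rho> \<in> exit_paths n" by (simp add: exit_paths_def exit_steps_def \<rho>_def)
  moreover have "\<omega> \<in> escape_event n \<rho>"
    using in_cylinder_path_prefix[OF \<omega>(2)] after XT by (auto simp: escape_event_def \<rho>_def le_Suc_eq)
  ultimately show ?thesis by blast
qed

lemma bij_betw_steps_of_exit_paths:
  "bij_betw steps_of {\<rho> \<in> exit_paths n. \<Psi> (steps_of \<rho>)} {s. exit_steps n s \<and> \<Psi> s}"
proof (rule bij_betw_imageI)
  show "inj_on steps_of {\<rho> \<in> exit_paths n. \<Psi> (steps_of \<rho>)}"
    by (auto simp: inj_on_def exit_paths_def intro: steps_of_inj)
  have "s \<in> steps_of ` {\<rho> \<in> exit_paths n. \<Psi> (steps_of \<rho>)}" if "exit_steps n s" "\<Psi> s" for s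
  proof -
    have "chain_from 0 s" "s \<noteq> []" using that by (auto simp: exit_steps_def)
    then have "steps_of (0 # map snd s) = s" "2 \<le> length (0 # map snd s)"
      by (auto simp: steps_of_chain_from Suc_le_eq)
    with that show ?thesis by (auto simp: exit_paths_def image_iff intro!: exI[of _ "0 # map snd s"])
  qed
  then show "steps_of ` {\<rho> \<in> exit_paths n. \<Psi> (steps_of \<rho>)} = {s. exit_steps n s \<and> \<Psi> s}"
    by (auto simp: exit_paths_def)
qed

lemma emeasure_exit_decomposition:
  assumes Ev: "Ev \<in> sets M" "\<And>\<omega>. \<omega> \<in> Ev \<Longrightarrow> finite {t. X t \<omega> = L \<and> X (Suc t) \<omega> = Suc L}"
    and \<Psi>: "\<And>\<rho> \<omega>. \<rho> \<in> exit_paths n \<Longrightarrow> \<omega> \<in> escape_event n \<rho> \<Longrightarrow> \<omega> \<in> Ev \<longleftrightarrow> \<Psi> (steps_of \<rho>)"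
  shows "emeasure M Ev = weight_sum {s. exit_steps n s \<and> \<Psi> s} * stay_above n"
proof -
  define I where "I = {\<rho> \<in> exit_paths n. \<Psi> (steps_of \<rho>)}"
  have "AE \<omega> in M. \<omega> \<in> Ev \<longleftrightarrow> \<omega> \<in> (\<Union>\<rho>\<in>I. escape_event n \<rho>)"
    using AE_regular AE_space
  proof eventually_elim
    case (elim \<omega>)
    show ?case
    proof
      assume "\<omega> \<in> Ev"
      with regular_escape[OF elim Ev(2)] obtain \<rho> where "\<rho> \<in> exit_paths n" "\<omega> \<in> escape_event n \<rho>"
        by blast
      with \<Psi> \<open>\<omega> \<in> Ev\<close> show "\<omega> \<in> (\<Union>\<rho>\<in>I. escape_event n \<rho>)" by (auto simp: I_def)
    qed (use \<Psi> in \<open>auto simp: I_def\<close>)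
  qed
  then have "emeasure M Ev = emeasure M (\<Union>\<rho>\<in>I. escape_event n \<rho>)"
    by (rule emeasure_eq_AE) (auto intro: Ev sets.countable_UN')
  also have "\<dots> = (\<integral>\<^sup>+ \<rho>. emeasure M (escape_event n \<rho>) \<partial>count_space I)"
    using disjoint_family_on_escape_event[of n]
    by (intro emeasure_UN_countable) (auto simp: I_def disjoint_family_on_def)
  also have "\<dots> = (\<integral>\<^sup>+ \<rho>. ennreal (path_weight p (steps_of \<rho>)) * stay_above n \<partial>count_space I)"
  proof (intro nn_integral_cong)
    fix \<rho> assume "\<rho> \<in> space (count_space I)"
    then have "\<rho> \<in> exit_paths n" by (simp add: I_def)
    from exit_paths_D(1,2,4)[OF this]
    show "emeasure M (escape_event n \<rho>) = ennreal (path_weight p (steps_of \<rho>)) * stay_above n"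
      by (rule emeasure_escape_event)
  qed
  also have "\<dots> = (\<integral>\<^sup>+ \<rho>. ennreal (path_weight p (steps_of \<rho>)) \<partial>count_space I) * stay_above n"
    by (simp add: nn_integral_multc)
  also have "(\<integral>\<^sup>+ \<rho>. ennreal (path_weight p (steps_of \<rho>)) \<partial>count_space I) =
      weight_sum {s. exit_steps n s \<and> \<Psi> s}"
    unfolding I_def by (rule nn_integral_bij_count_space[OF bij_betw_steps_of_exit_paths])
  finally show ?thesis .
qed

section \<open>Factorization\<close>

lemma nn_integral_exit_steps_split:
  assumes "L < n"
  shows "weight_sum {s. exit_steps n s \<and> Pb (steps_below L s) \<and> Pa (steps_above L s)}
    = (\<integral>\<^sup>+ b. ennreal (path_weight p b) * weight_sum {a. above_part L n (count_list b (L, Suc L)) a \<and> Pa a}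
      \<partial>count_space {b. below_part L b \<and> Pb b})"
proof -
  let ?S = "{s. exit_steps n s \<and> Pb (steps_below L s) \<and> Pa (steps_above L s)}"
  let ?B = "{b. below_part L b \<and> Pb b}"
  let ?A = "\<lambda>b. {a. above_part L n (count_list b (L, Suc L)) a \<and> Pa a}"
  let ?w = "\<lambda>s. ennreal (path_weight p s)"
  note bij_all = bij_betw_exit_steps_split[OF assms]
  have img: "(\<lambda>s. (steps_below L s, steps_above L s)) ` ?S = (SIGMA b:?B. ?A b)"
  proof
    show "(\<lambda>s. (steps_below L s, steps_above L s)) ` ?S \<subseteq> (SIGMA b:?B. ?A b)"
      using exit_steps_split[OF _ assms] by auto
    show "(SIGMA b:?B. ?A b) \<subseteq> (\<lambda>s. (steps_below L s, steps_above L s)) ` ?S"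
    proof
      fix z assume "z \<in> (SIGMA b:?B. ?A b)"
      then obtain b a where z: "z = (b, a)" and ba: "b \<in> ?B" "a \<in> ?A b" by blast
      then have "z \<in> (\<lambda>s. (steps_below L s, steps_above L s)) ` {s. exit_steps n s}"
        using bij_betw_imp_surj_on[OF bij_all] by auto
      then obtain s where s: "exit_steps n s" "z = (steps_below L s, steps_above L s)" by blast
      with z ba have "s \<in> ?S" by simp
      with s(2) show "z \<in> (\<lambda>s. (steps_below L s, steps_above L s)) ` ?S" by (rule image_eqI)
    qed
  qed
  have bij: "bij_betw (\<lambda>s. (steps_below L s, steps_above L s)) ?S (SIGMA b:?B. ?A b)"
    by (rule bij_betw_subset[OF bij_all _ img]) auto
  have "(\<integral>\<^sup>+ s. ?w s \<partial>count_space ?S) =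
      (\<integral>\<^sup>+ s. (\<lambda>z. ?w (fst z) * ?w (snd z)) (steps_below L s, steps_above L s) \<partial>count_space ?S)"
  proof (rule nn_integral_cong)
    fix s
    show "?w s = (\<lambda>z. ?w (fst z) * ?w (snd z)) (steps_below L s, steps_above L s)"
      using path_weight_steps_below_above[of p s L] by (simp add: ennreal_mult path_weight_nonneg[OF p_bounds])
  qed
  also have "\<dots> = (\<integral>\<^sup>+ z. ?w (fst z) * ?w (snd z) \<partial>count_space (SIGMA b:?B. ?A b))"
    by (rule nn_integral_bij_count_space[OF bij])
  also have "\<dots> = (\<integral>\<^sup>+ z. ?w (fst z) * ?w (snd z) * indicator (SIGMA b:?B. ?A b) z \<partial>count_space UNIV)"
    by (rule nn_integral_count_space_indicator) simp
  also have "\<dots> = (\<integral>\<^sup>+ b. \<integral>\<^sup>+ a. ?w b * ?w a * indicator (SIGMA b:?B. ?A b) (b, a)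
      \<partial>count_space UNIV \<partial>count_space UNIV)"
    using nn_integral_fst_count_space[of "\<lambda>z. ?w (fst z) * ?w (snd z) * indicator (SIGMA b:?B. ?A b) z"]
    by simp
  also have "\<dots> = (\<integral>\<^sup>+ b. (?w b * indicator ?B b) * (\<integral>\<^sup>+ a. ?w a * indicator (?A b) a \<partial>count_space UNIV)
      \<partial>count_space UNIV)"
  proof (rule nn_integral_cong)
    fix b
    have "(\<integral>\<^sup>+ a. ?w b * ?w a * indicator (SIGMA b:?B. ?A b) (b, a) \<partial>count_space UNIV)
        = (\<integral>\<^sup>+ a. (?w b * indicator ?B b) * (?w a * indicator (?A b) a) \<partial>count_space UNIV)"
      by (rule nn_integral_cong) (auto simp: indicator_def)
    then show "(\<integral>\<^sup>+ a. ?w b * ?w a * indicator (SIGMA b:?B. ?A b) (b, a) \<partial>count_space UNIV)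
        = (?w b * indicator ?B b) * (\<integral>\<^sup>+ a. ?w a * indicator (?A b) a \<partial>count_space UNIV)"
      by (simp add: nn_integral_cmult)
  qed
  also have "\<dots> = (\<integral>\<^sup>+ b. ?w b * (\<integral>\<^sup>+ a. ?w a \<partial>count_space (?A b)) \<partial>count_space ?B)"
    by (subst (2) nn_integral_count_space_indicator)
      (auto simp: nn_integral_count_space_indicator indicator_def intro!: nn_integral_cong)
  finally show ?thesis .
qed

lemma emeasure_split_at_level:
  assumes L: "L < n" and [measurable]: "Measurable.pred M \<Phi>"
    and fin: "\<And>\<omega>. \<omega> \<in> space M \<Longrightarrow> \<Phi> \<omega> \<Longrightarrow> finite {t. X t \<omega> = L \<and> X (Suc t) \<omega> = Suc L}"
    and \<Phi>: "\<And>\<rho> \<omega>. \<rho> \<in> exit_paths n \<Longrightarrow> \<omega> \<in> escape_event n \<rho> \<Longrightarrow>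
      \<Phi> \<omega> \<longleftrightarrow> Pb (steps_below L (steps_of \<rho>)) \<and> Pa (steps_above L (steps_of \<rho>))"
  shows "emeasure M {\<omega> \<in> space M. \<Phi> \<omega>} =
    (\<integral>\<^sup>+ b. ennreal (path_weight p b) * weight_sum {a. above_part L n (count_list b (L, Suc L)) a \<and> Pa a}
      \<partial>count_space {b. below_part L b \<and> Pb b}) * stay_above n"
proof -
  have "emeasure M {\<omega> \<in> space M. \<Phi> \<omega>} =
      weight_sum {s. exit_steps n s \<and> Pb (steps_below L s) \<and> Pa (steps_above L s)} * stay_above n"
    by (rule emeasure_exit_decomposition) (use fin \<Phi> escape_event_D(1) in auto)
  then show ?thesis by (simp add: nn_integral_exit_steps_split[OF L])
qed

lemma inC_iff_inC_steps_below:
  assumes "\<rho> \<in> exit_paths n" "\<omega> \<in> escape_event n \<rho>" "x \<le> L" "L \<le> n"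
  shows "inC C X x \<omega> \<longleftrightarrow> inC_steps C x (steps_below L (steps_of \<rho>))"
  using assms by (simp add: inC_iff_inC_steps inC_steps_cong[OF steps_at_steps_below])

lemma inC_iff_inC_steps_above:
  assumes "\<rho> \<in> exit_paths n" "\<omega> \<in> escape_event n \<rho>" "L < x" "x \<le> n"
  shows "inC C X x \<omega> \<longleftrightarrow> inC_steps C x (steps_above L (steps_of \<rho>))"
  using assms by (simp add: inC_iff_inC_steps inC_steps_cong[OF steps_at_steps_above])

lemma nn_integral_split_const_crossings:
  assumes "\<And>b. below_part L b \<Longrightarrow> Pb b \<Longrightarrow> count_list b (L, Suc L) = m"
  shows "(\<integral>\<^sup>+ b. ennreal (path_weight p b) * weight_sum {a. above_part L n (count_list b (L, Suc L)) a \<and> Pa a}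
      \<partial>count_space {b. below_part L b \<and> Pb b})
    = weight_sum {b. below_part L b \<and> Pb b} * weight_sum {a. above_part L n m a \<and> Pa a}"
proof -
  have "(\<integral>\<^sup>+ b. ennreal (path_weight p b) * weight_sum {a. above_part L n (count_list b (L, Suc L)) a \<and> Pa a}
      \<partial>count_space {b. below_part L b \<and> Pb b})
    = (\<integral>\<^sup>+ b. ennreal (path_weight p b) * weight_sum {a. above_part L n m a \<and> Pa a}
      \<partial>count_space {b. below_part L b \<and> Pb b})"
    by (rule nn_integral_cong) (use assms in simp)
  then show ?thesis by (simp add: nn_integral_multc)
qed

lemma nn_integral_above_part_no_down_after_up:
  assumes "1 \<le> m" and Q: "\<And>g k. Q (replicate k (Suc L, L) @ g) = Q g"
  shows "weight_sum {a. above_part L n m a \<and> no_down_after_up (Suc L) a \<and> Q a}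
    = ennreal ((1 - p (Suc L)) ^ (m - 1)) *
      weight_sum {g. above_part L n 1 g \<and> Q g}"
proof -
  have "weight_sum {a. above_part L n m a \<and> no_down_after_up (Suc L) a \<and> Q a}
      = (\<integral>\<^sup>+ g. ennreal (path_weight p (replicate (m - 1) (Suc L, L) @ g)) \<partial>count_space {g. above_part L n 1 g \<and> Q g})"
    by (rule nn_integral_bij_count_space[OF bij_betw_replicate_down[OF assms], symmetric])
  also have "\<dots> = (\<integral>\<^sup>+ g. ennreal ((1 - p (Suc L)) ^ (m - 1)) * ennreal (path_weight p g)
      \<partial>count_space {g. above_part L n 1 g \<and> Q g})"
    using p_bounds[of "Suc L"]
    by (simp add: path_weight_replicate_down ennreal_mult path_weight_nonneg[OF p_bounds])
  finally show ?thesis by (simp add: nn_integral_cmult)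
qed

lemma nn_integral_split_no_down_after_up:
  assumes Q: "\<And>g k. Q (replicate k (Suc L, L) @ g) = Q g"
  shows "(\<integral>\<^sup>+ b. ennreal (path_weight p b) *
        (\<integral>\<^sup>+ a. ennreal (path_weight p a)
          \<partial>count_space {a. above_part L n (count_list b (L, Suc L)) a \<and> no_down_after_up (Suc L) a \<and> Q a})
      \<partial>count_space {b. below_part L b \<and> Pb b})
    = (\<integral>\<^sup>+ b. ennreal (path_weight p b) * ennreal ((1 - p (Suc L)) ^ (count_list b (L, Suc L) - 1))
        \<partial>count_space {b. below_part L b \<and> Pb b}) *
      weight_sum {g. above_part L n 1 g \<and> Q g}"
proof -
  have "1 \<le> count_list b (L, Suc L)" if "below_part L b" for b
    using count_list_pos_below_part[OF that] by simp
  then show ?thesis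
    by (simp add: nn_integral_multc[symmetric] nn_integral_above_part_no_down_after_up[OF _ Q] mult.assoc
        cong: nn_integral_cong_simp)
qed

lemma cond_prob_eq_if_split:
  assumes L: "L < n"
    and fin: "\<And>\<omega>. \<omega> \<in> space M \<Longrightarrow> inC C X k \<omega> \<Longrightarrow> finite {t. X t \<omega> = L \<and> X (Suc t) \<omega> = Suc L}"
    and A: "\<And>\<rho> \<omega>. \<rho> \<in> exit_paths n \<Longrightarrow> \<omega> \<in> escape_event n \<rho> \<Longrightarrow>
      inC C X i \<omega> \<longleftrightarrow> PA (steps_below L (steps_of \<rho>))"
    and B: "\<And>\<rho> \<omega>. \<rho> \<in> exit_paths n \<Longrightarrow> \<omega> \<in> escape_event n \<rho> \<Longrightarrow>
      inC C X k \<omega> \<longleftrightarrow> PB (steps_below L (steps_of \<rho>)) \<and> QB (steps_above L (steps_of \<rho>))"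
    and F: "\<And>\<rho> \<omega>. \<rho> \<in> exit_paths n \<Longrightarrow> \<omega> \<in> escape_event n \<rho> \<Longrightarrow>
      (\<forall>j\<in>{k+1..n}. \<not> inC C X j \<omega>) \<longleftrightarrow> QF (steps_above L (steps_of \<rho>))"
    and factor: "\<And>Pb Qa. Qa \<in> {QF, \<lambda>_. True} \<Longrightarrow>
      (\<integral>\<^sup>+ b. ennreal (path_weight p b) * weight_sum {a. above_part L n (count_list b (L, Suc L)) a \<and> QB a \<and> Qa a}
      \<partial>count_space {b. below_part L b \<and> PB b \<and> Pb b}) = K Pb * G Qa"
    and pos: "\<P>(\<omega> in M. inC C X i \<omega> \<and> inC C X k \<omega>) > 0" "\<P>(\<omega> in M. inC C X k \<omega>) > 0"
  shows "\<P>(\<omega> in M. (\<forall>j\<in>{k+1..n}. \<not> inC C X j \<omega>) \<bar> inC C X i \<omega> \<and> inC C X k \<omega>)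
       = \<P>(\<omega> in M. (\<forall>j\<in>{k+1..n}. \<not> inC C X j \<omega>) \<bar> inC C X k \<omega>)"
proof -
  have event: "emeasure M {\<omega> \<in> space M. \<Phi> \<omega>} = K Pb * G Qa * stay_above n"
    if [measurable]: "Measurable.pred M \<Phi>" and "\<And>\<omega>. \<Phi> \<omega> \<Longrightarrow> inC C X k \<omega>" and "Qa \<in> {QF, \<lambda>_. True}"
      and "\<And>\<rho> \<omega>. \<rho> \<in> exit_paths n \<Longrightarrow> \<omega> \<in> escape_event n \<rho> \<Longrightarrow>
        \<Phi> \<omega> \<longleftrightarrow> (PB (steps_below L (steps_of \<rho>)) \<and> Pb (steps_below L (steps_of \<rho>))) \<and>
          (QB (steps_above L (steps_of \<rho>)) \<and> Qa (steps_above L (steps_of \<rho>)))"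
    for \<Phi> Pb Qa
  proof -
    have "emeasure M {\<omega> \<in> space M. \<Phi> \<omega>} = (\<integral>\<^sup>+ b. ennreal (path_weight p b) * weight_sum {a. above_part L n (count_list b (L, Suc L)) a \<and> QB a \<and> Qa a}
      \<partial>count_space {b. below_part L b \<and> PB b \<and> Pb b}) * stay_above n"
      by (rule emeasure_split_at_level[OF L that(1)]) (use that(2,4) fin in auto)
    then show ?thesis using factor[OF that(3), of Pb] by simp
  qed
  let ?F = "\<lambda>\<omega>. \<forall>j\<in>{k+1..n}. \<not> inC C X j \<omega>"
  have "emeasure M {\<omega> \<in> space M. ?F \<omega> \<and> inC C X i \<omega> \<and> inC C X k \<omega>} = K PA * G QF * stay_above n"
    by (rule event) (use A B F in auto)
  moreover have "emeasure M {\<omega> \<in> space M. inC C X i \<omega> \<and> inC C X k \<omega>} = K PA * G (\<lambda>_. True) * stay_above n"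
    by (rule event) (use A B in auto)
  moreover have "emeasure M {\<omega> \<in> space M. ?F \<omega> \<and> inC C X k \<omega>} = K (\<lambda>_. True) * G QF * stay_above n"
    by (rule event) (use B F in auto)
  moreover have "emeasure M {\<omega> \<in> space M. inC C X k \<omega>} = K (\<lambda>_. True) * G (\<lambda>_. True) * stay_above n"
    by (rule event) (use B in auto)
  ultimately have "measure M {\<omega> \<in> space M. ?F \<omega> \<and> inC C X i \<omega> \<and> inC C X k \<omega>} /
      measure M {\<omega> \<in> space M. inC C X i \<omega> \<and> inC C X k \<omega>} =
    measure M {\<omega> \<in> space M. ?F \<omega> \<and> inC C X k \<omega>} / measure M {\<omega> \<in> space M. inC C X k \<omega>}"
    by (rule measure_ratio_eq_if_product_form) (use pos in auto)
  then show ?thesis by (simp add: cond_prob_def)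
qed

lemma cond_prob_eq_fixed_crossings:
  assumes C: "C \<in> {Cab a b, Cstar a}" and ik: "i \<le> k" "k < n"
    and pos: "\<P>(\<omega> in M. inC C X i \<omega> \<and> inC C X k \<omega>) > 0" "\<P>(\<omega> in M. inC C X k \<omega>) > 0"
  shows "\<P>(\<omega> in M. (\<forall>j\<in>{k+1..n}. \<not> inC C X j \<omega>) \<bar> inC C X i \<omega> \<and> inC C X k \<omega>)
       = \<P>(\<omega> in M. (\<forall>j\<in>{k+1..n}. \<not> inC C X j \<omega>) \<bar> inC C X k \<omega>)"
proof -
  obtain m where m: "\<And>s. inC_steps C k s \<Longrightarrow> count_list s (k, Suc k) = m"
    and xi_up: "\<And>\<omega>. inC C X k \<omega> \<Longrightarrow> xi_up X k \<omega> = enat m"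
    using C by (auto simp: inC_steps_def)
  show ?thesis
  proof (rule cond_prob_eq_if_split[where L = k and PA = "inC_steps C i" and PB = "inC_steps C k"
        and QB = "\<lambda>_. True" and QF = "\<lambda>a. \<forall>j\<in>{k+1..n}. \<not> inC_steps C j a"
        and K = "\<lambda>Pb. weight_sum {b. below_part k b \<and> inC_steps C k b \<and> Pb b}"
        and G = "\<lambda>Qa. weight_sum {a. above_part k n m a \<and> True \<and> Qa a}"])
    show "finite {t. X t \<omega> = k \<and> X (Suc t) \<omega> = Suc k}" if "inC C X k \<omega>" for \<omega>
      using xi_up[OF that] by (auto simp: xi_up_def split: if_splits)
    show "(\<integral>\<^sup>+ b. ennreal (path_weight p b) * (\<integral>\<^sup>+ a. ennreal (path_weight p a)
        \<partial>count_space {a. above_part k n (count_list b (k, Suc k)) a \<and> True \<and> Qa a})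
      \<partial>count_space {b. below_part k b \<and> inC_steps C k b \<and> Pb b}) =
      weight_sum {b. below_part k b \<and> inC_steps C k b \<and> Pb b} *
      weight_sum {a. above_part k n m a \<and> True \<and> Qa a}" for Pb Qa
      using m by (intro nn_integral_split_const_crossings) simp
  qed (use ik pos inC_iff_inC_steps_below[where L = k] inC_iff_inC_steps_above[where L = k] in auto)
qed

lemma cond_prob_eq_weak_cutpoint:
  assumes ik: "i < k" "k < n"
    and pos: "\<P>(\<omega> in M. inC Cw X i \<omega> \<and> inC Cw X k \<omega>) > 0" "\<P>(\<omega> in M. inC Cw X k \<omega>) > 0"
  shows "\<P>(\<omega> in M. (\<forall>j\<in>{k+1..n}. \<not> inC Cw X j \<omega>) \<bar> inC Cw X i \<omega> \<and> inC Cw X k \<omega>)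
       = \<P>(\<omega> in M. (\<forall>j\<in>{k+1..n}. \<not> inC Cw X j \<omega>) \<bar> inC Cw X k \<omega>)"
proof -
  obtain L where k: "k = Suc L" using ik by (cases k) auto
  let ?QF = "\<lambda>a. \<forall>j\<in>{k+1..n}. \<not> inC_steps Cw j a"
  have QF: "?QF (replicate r (Suc L, L) @ g) = ?QF g" for r g
    using inC_steps_cong[OF steps_at_replicate_append] k by auto
  show ?thesis
  proof (rule cond_prob_eq_if_split[where L = L and PA = "inC_steps Cw i" and PB = "\<lambda>_. True"
        and QB = "no_down_after_up k" and QF = ?QF
        and K = "\<lambda>Pb. \<integral>\<^sup>+ b. ennreal (path_weight p b) * ennreal ((1 - p (Suc L)) ^ (count_list b (L, Suc L) - 1))
          \<partial>count_space {b. below_part L b \<and> True \<and> Pb b}"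
        and G = "\<lambda>Qa. weight_sum {g. above_part L n 1 g \<and> Qa g}"])
    show "finite {t. X t \<omega> = L \<and> X (Suc t) \<omega> = Suc L}" if "inC Cw X k \<omega>" for \<omega>
      using that k by (auto intro: finite_up_steps_if_weak_cutpoint)
    show "inC Cw X k \<omega> \<longleftrightarrow> True \<and> no_down_after_up k (steps_above L (steps_of \<rho>))"
      if "\<rho> \<in> exit_paths n" "\<omega> \<in> escape_event n \<rho>" for \<rho> \<omega>
      using inC_iff_inC_steps_above[OF that, of L k Cw] k ik by (simp add: inC_steps_def)
    show "(\<integral>\<^sup>+ b. ennreal (path_weight p b) * (\<integral>\<^sup>+ a. ennreal (path_weight p a)
        \<partial>count_space {a. above_part L n (count_list b (L, Suc L)) a \<and> no_down_after_up k a \<and> Qa a})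
      \<partial>count_space {b. below_part L b \<and> True \<and> Pb b}) =
      (\<integral>\<^sup>+ b. ennreal (path_weight p b) * ennreal ((1 - p (Suc L)) ^ (count_list b (L, Suc L) - 1))
          \<partial>count_space {b. below_part L b \<and> True \<and> Pb b}) *
      weight_sum {g. above_part L n 1 g \<and> Qa g}"
      if "Qa \<in> {?QF, \<lambda>_. True}" for Pb Qa
    proof -
      have "Qa (replicate r (Suc L, L) @ g) = Qa g" for r g using that QF by auto
      from nn_integral_split_no_down_after_up[OF this, where n = n and Pb = Pb] k show ?thesis by simp
    qed
    show "inC Cw X i \<omega> \<longleftrightarrow> inC_steps Cw i (steps_below L (steps_of \<rho>))"
      if "\<rho> \<in> exit_paths n" "\<omega> \<in> escape_event n \<rho>" for \<rho> \<omega>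
      by (rule inC_iff_inC_steps_below[OF that]) (use ik k in auto)
    show "(\<forall>j\<in>{k+1..n}. \<not> inC Cw X j \<omega>) \<longleftrightarrow> ?QF (steps_above L (steps_of \<rho>))"
      if "\<rho> \<in> exit_paths n" "\<omega> \<in> escape_event n \<rho>" for \<rho> \<omega>
      using inC_iff_inC_steps_above[OF that, where L = L and C = Cw] k by (auto simp del: inC.simps)
  qed (use ik k pos in auto)
qed

end

theorem lemma6:
  fixes M :: "'a measure" and p :: "nat \<Rightarrow> real" and X :: "nat \<Rightarrow> 'a \<Rightarrow> nat"
    and a b i k n :: nat and C :: cset_kind
  assumes p0: "p 0 = 1"
    and p_pos: "\<And>k. 1 \<le> k \<Longrightarrow> 0 < p k \<and> p k < 1"
    and chain: "is_bd_chain M p X"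
    and D1: "Dfun p 1 < \<infinity>"
    and ab: "b \<le> a" "1 \<le> b"
    and C: "C \<in> {Cab a b, Cstar a, Cw}"
    and ik: "i \<le> k" "k < n"
    and pos1: "\<P>(\<omega> in M. inC C X i \<omega> \<and> inC C X k \<omega>) > 0"
    and pos2: "\<P>(\<omega> in M. inC C X k \<omega>) > 0"
  shows "\<P>(\<omega> in M. (\<forall>j\<in>{k+1..n}. \<not> inC C X j \<omega>) \<bar> inC C X i \<omega> \<and> inC C X k \<omega>)
       = \<P>(\<omega> in M. (\<forall>j\<in>{k+1..n}. \<not> inC C X j \<omega>) \<bar> inC C X k \<omega>)"
proof -
  interpret bd_chain M p X using p0 p_pos chain by unfold_locales auto
  consider "i = k" | "C = Cw" "i < k" | "C \<in> {Cab a b, Cstar a}"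
    using C ik by fastforce
  then show ?thesis
  proof cases
    case 2
    then show ?thesis using cond_prob_eq_weak_cutpoint ik pos1 pos2 by simp
  next
    case 3
    then show ?thesis using cond_prob_eq_fixed_crossings ik pos1 pos2 by blast
  qed simp
qed

end
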